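(* Let $G$ be a graph with a hole cover $\mathcal C$ satisfying the NC property in $G$, and let $u,w\in\mathcal C$ be adjacent in $G$. Then there is no vertex $v$ such that both $uv$ and $wv$ are newly added edges, i.e. both belong to $E(\widehat G(\mathcal C))\setminus E(G)$.
   Context: All graphs are finite and simple. A hole of $G$ is an induced cycle of length at least $4$; $\mathcal H(G)$ is the set of holes of $G$ and $\mathcal H(G,u)$ the set of holes containing $u$. A hole cover of $G$ is a nonempty $X\subseteq V(G)$ meeting every hole. A vertex $u$ satisfies the NC property in $G$ if there are no holes $H\in\mathcal H(G,u)$, $H'\in\mathcal H(G)\setminus\mathcal H(G,u)$ sharing two consecutive edges (two distinct edges with a common end vertex lying on both). A set $\mathcal C$ satisfies the NC property in $G$ if each of its vertices does and every hole contains at most one vertex of $\mathcal C$. Locally chordalizing all holes in $\mathcal H(G,u)$ by $u$ means adding all edges $uw$ with $w\ne u$ lying on some hole in $\mathcal H(G,u)$. For a hole cover $\mathcal C=\{u_1,\dots,u_k\}$ satisfying the NC property in $G$, set $G_0=G$, let $G_i$ be obtained from $G_{i-1}$ by locally chordalizing all holes in $\mathcal H(G_{i-1},u_i)$ by $u_i$, and put $\widehat G(\mathcal C)=G_k$ (this graph is chordal and independent of the ordering of $\mathcal C$). Edges of $\widehat G(\mathcal C)$ not in $G$ are called newly added edges. *)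

theory Defs
  imports Main
begin

definition simple_graph :: "'a set \<Rightarrow> 'a set set \<Rightarrow> bool" where
  "simple_graph V E \<longleftrightarrow> finite V \<and>
     (\<forall>e\<in>E. \<exists>x y. e = {x, y} \<and> x \<noteq> y \<and> x \<in> V \<and> y \<in> V)"

text \<open>A hole (induced cycle of length at least 4), identified by its vertex set:
  there is a cyclic enumeration xs of H in which two vertices are adjacent in G
  iff they are cyclically consecutive.\<close>
definition is_hole :: "'a set \<Rightarrow> 'a set set \<Rightarrow> 'a set \<Rightarrow> bool" where
  "is_hole V E H \<longleftrightarrow> (\<exists>xs. distinct xs \<and> length xs \<ge> 4 \<and> set xs = H \<and> H \<subseteq> V \<and>
     (\<forall>i < length xs. \<forall>j < length xs.
        {xs ! i, xs ! j} \<in> E \<longleftrightarrow>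
          (j = Suc i mod length xs \<or> i = Suc j mod length xs)))"

definition holes :: "'a set \<Rightarrow> 'a set set \<Rightarrow> 'a set set" where
  "holes V E = {H. is_hole V E H}"

definition holes_at :: "'a set \<Rightarrow> 'a set set \<Rightarrow> 'a \<Rightarrow> 'a set set" where
  "holes_at V E u = {H \<in> holes V E. u \<in> H}"

text \<open>Edges of a hole (holes are induced, so these are the edges of G inside H).\<close>
definition hole_edges :: "'a set set \<Rightarrow> 'a set \<Rightarrow> 'a set set" where
  "hole_edges E H = {e \<in> E. e \<subseteq> H}"

definition hole_cover :: "'a set \<Rightarrow> 'a set set \<Rightarrow> 'a set \<Rightarrow> bool" where
  "hole_cover V E X \<longleftrightarrow> X \<noteq> {} \<and> X \<subseteq> V \<and> (\<forall>H \<in> holes V E. H \<inter> X \<noteq> {})"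

definition share_consec_edges :: "'a set set \<Rightarrow> 'a set \<Rightarrow> 'a set \<Rightarrow> bool" where
  "share_consec_edges E H H' \<longleftrightarrow> (\<exists>x y z. x \<noteq> z \<and>
     {x, y} \<in> hole_edges E H \<inter> hole_edges E H' \<and>
     {y, z} \<in> hole_edges E H \<inter> hole_edges E H')"

definition NC_vertex :: "'a set \<Rightarrow> 'a set set \<Rightarrow> 'a \<Rightarrow> bool" where
  "NC_vertex V E u \<longleftrightarrow>
     \<not> (\<exists>H \<in> holes_at V E u. \<exists>H' \<in> holes V E - holes_at V E u. share_consec_edges E H H')"

definition NC_set :: "'a set \<Rightarrow> 'a set set \<Rightarrow> 'a set \<Rightarrow> bool" where
  "NC_set V E C \<longleftrightarrow> (\<forall>u \<in> C. NC_vertex V E u) \<and>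
     (\<forall>H \<in> holes V E. card (H \<inter> C) \<le> 1)"

definition local_chordalize :: "'a set \<Rightarrow> 'a set set \<Rightarrow> 'a \<Rightarrow> 'a set set" where
  "local_chordalize V E u =
     E \<union> {{u, w} | w. w \<noteq> u \<and> (\<exists>H \<in> holes_at V E u. w \<in> H)}"

fun chordalize_seq :: "'a set \<Rightarrow> 'a set set \<Rightarrow> 'a list \<Rightarrow> 'a set set" where
  "chordalize_seq V E [] = E"
| "chordalize_seq V E (u # us) = chordalize_seq V (local_chordalize V E u) us"

end

theory Submission
  imports Defs
begin

text \<open>
  Chordalizing at an NC vertex u leaves no hole through u and creates no new hole. In a hole
  through u of the chordalized graph, an end a of the path left after removing u that is only a
  new neighbour of u lies inside a hole H of G through u, while the next vertex y reaches a
  neighbour of u avoiding the closed neighbourhood of a. Combining this detour with H gives either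
  a hole through u and y, so that uy would have been added, or a hole avoiding u that shares two
  consecutive edges with H, against the NC property. Hence all holes met during the
  chordalization are holes of G, and as a hole meets the cover at most once, a new edge xv at a
  cover vertex x joins x to a vertex of a hole of G through x.

  So if uv and wv were both new for adjacent cover vertices u and w, then v, which is adjacent to
  neither, lies on a hole through u and on a hole through w. Leaving v along the hole through u,
  the first vertex adjacent to u or w is adjacent to u only, for otherwise the NC property of w
  fails; symmetrically on the hole through w. A shortest path between these two vertices through
  vertices adjacent to neither u nor w, closed up by w and u, is a hole containing both u and w,
  which the cover forbids.
\<close>

definition adj :: "'a set set \<Rightarrow> 'a \<Rightarrow> 'a \<Rightarrow> bool" where
  "adj E x y \<longleftrightarrow> {x, y} \<in> E"

lemma adj_sym: "adj E x y = adj E y x"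
  by (simp add: adj_def insert_commute)

definition loopfree :: "'a set set \<Rightarrow> bool" where
  "loopfree E \<longleftrightarrow> (\<forall>x. {x} \<notin> E)"

lemma loopfree_not_adj: "loopfree E \<Longrightarrow> \<not> adj E x x"
  by (simp add: adj_def loopfree_def)

lemma simple_graph_loopfree: "simple_graph V E \<Longrightarrow> loopfree E"
  unfolding simple_graph_def loopfree_def by (metis doubleton_eq_iff insert_absorb2)

lemma adj_in_vertices: "simple_graph V E \<Longrightarrow> adj E x y \<Longrightarrow> x \<in> V \<and> y \<in> V"
  unfolding simple_graph_def adj_def by (metis doubleton_eq_iff)

lemma in_set_take_nth: "x \<in> set (take s q) \<Longrightarrow> \<exists>i. i < s \<and> i < length q \<and> x = q!i"
proof -
  assume "x \<in> set (take s q)"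
  then obtain i where i: "i < length (take s q)" "x = take s q ! i" by (auto simp: in_set_conv_nth)
  thus ?thesis by (intro exI[of _ i]) auto
qed

lemma in_set_drop_nth: "x \<in> set (drop r q) \<Longrightarrow> \<exists>j. r \<le> j \<and> j < length q \<and> x = q!j"
proof -
  assume "x \<in> set (drop r q)"
  then obtain i where i: "i < length (drop r q)" "x = drop r q ! i" by (auto simp: in_set_conv_nth)
  thus ?thesis by (intro exI[of _ "r + i"]) auto
qed

lemma in_set_segment: "x \<in> set (take n (drop a q)) \<Longrightarrow> \<exists>k. a \<le> k \<and> k < a + n \<and> k < length q \<and> x = q!k"
proof -
  assume "x \<in> set (take n (drop a q))"
  then obtain i where i: "i < length (take n (drop a q))" "x = take n (drop a q) ! i"
    by (auto simp: in_set_conv_nth)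
  thus ?thesis by (intro exI[of _ "a + i"]) auto
qed

section \<open>Induced paths and lazy walks\<close>

definition induced_path :: "'a set set \<Rightarrow> 'a list \<Rightarrow> bool" where
  "induced_path E xs \<longleftrightarrow> distinct xs \<and> (\<forall>i<length xs. \<forall>j<length xs.
      adj E (xs!i) (xs!j) \<longleftrightarrow> (j = Suc i \<or> i = Suc j))"

definition lazy_walk :: "'a set set \<Rightarrow> 'a list \<Rightarrow> bool" where
  "lazy_walk E xs \<longleftrightarrow> (\<forall>i. Suc i < length xs \<longrightarrow> xs!i = xs!Suc i \<or> adj E (xs!i) (xs!Suc i))"

lemma induced_path_rev: assumes "induced_path E xs" shows "induced_path E (rev xs)"
  unfolding induced_path_def
proof (intro conjI allI impI)
  show "distinct (rev xs)" using assms by (simp add: induced_path_def)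
  fix i j assume i: "i < length (rev xs)" and j: "j < length (rev xs)"
  have "adj E (rev xs ! i) (rev xs ! j) = adj E (xs!(length xs - Suc i)) (xs!(length xs - Suc j))"
    using i j by (simp add: rev_nth)
  also have "\<dots> = (length xs - Suc j = Suc (length xs - Suc i) \<or> length xs - Suc i = Suc (length xs - Suc j))"
    using assms i j unfolding induced_path_def by auto
  also have "\<dots> = (j = Suc i \<or> i = Suc j)" using i j by auto
  finally show "adj E (rev xs ! i) (rev xs ! j) = (j = Suc i \<or> i = Suc j)" .
qed

lemma induced_path_drop: assumes "induced_path E xs" shows "induced_path E (drop k xs)"
  using assms unfolding induced_path_def by (auto simp: distinct_drop)

lemma induced_path_take: assumes "induced_path E xs" shows "induced_path E (take k xs)"
  using assms unfolding induced_path_def by auto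

lemma induced_path_singleton: "loopfree E \<Longrightarrow> induced_path E [w]"
  unfolding induced_path_def using loopfree_not_adj by fastforce

lemma induced_path_append:
  assumes "induced_path E xs" "induced_path E ys" "set xs \<inter> set ys = {}" "xs \<noteq> []" "ys \<noteq> []"
    "adj E (last xs) (hd ys)"
    "\<And>x y. x \<in> set xs \<Longrightarrow> y \<in> set ys \<Longrightarrow> adj E x y \<Longrightarrow> x = last xs \<and> y = hd ys"
  shows "induced_path E (xs @ ys)"
  unfolding induced_path_def
proof (intro conjI allI impI)
  show "distinct (xs @ ys)" using assms(1-3) by (simp add: induced_path_def)
  fix i j assume i: "i < length (xs @ ys)" and j: "j < length (xs @ ys)"
  let ?n = "length xs"
  have lx: "last xs = xs ! (?n - 1)" using assms(4) by (simp add: last_conv_nth)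
  have hy: "hd ys = ys ! 0" using assms(5) by (simp add: hd_conv_nth)
  have dx: "distinct xs" "distinct ys" using assms(1,2) by (auto simp: induced_path_def)
  show "adj E ((xs @ ys) ! i) ((xs @ ys) ! j) = (j = Suc i \<or> i = Suc j)"
  proof (cases "i < ?n"; cases "j < ?n")
    assume "i < ?n" "j < ?n" thus ?thesis using assms(1) by (simp add: nth_append induced_path_def)
  next
    assume a: "\<not> i < ?n" "\<not> j < ?n"
    then show ?thesis using assms(2) i j by (auto simp: nth_append induced_path_def)
  next
    assume a: "i < ?n" "\<not> j < ?n"
    have xi: "xs ! i \<in> set xs" using a by simp
    have yj: "ys ! (j - ?n) \<in> set ys" using a j by simp
    show ?thesis
    proof
      assume "adj E ((xs @ ys) ! i) ((xs @ ys) ! j)"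
      hence "adj E (xs!i) (ys!(j - ?n))" using a by (simp add: nth_append)
      from assms(7)[OF xi yj this] have "xs!i = xs!(?n-1)" "ys!(j-?n) = ys!0" using lx hy by auto
      moreover have "j - ?n < length ys" using a j by auto
      ultimately have "i = ?n - 1" "j - ?n = 0" using dx a assms(4,5)
        by (metis length_greater_0_conv nth_eq_iff_index_eq diff_less zero_less_one)+
      thus "j = Suc i \<or> i = Suc j" using a by auto
    next
      assume "j = Suc i \<or> i = Suc j"
      hence "i = ?n - 1" "j = ?n" using a by auto
      thus "adj E ((xs @ ys) ! i) ((xs @ ys) ! j)" using assms(4,6) lx hy by (simp add: nth_append)
    qed
  next
    assume a: "\<not> i < ?n" "j < ?n"
    have xi: "xs ! j \<in> set xs" using a by simp
    have yj: "ys ! (i - ?n) \<in> set ys" using a i by simp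
    show ?thesis
    proof
      assume "adj E ((xs @ ys) ! i) ((xs @ ys) ! j)"
      hence "adj E (xs!j) (ys!(i - ?n))" using a by (simp add: nth_append adj_sym)
      from assms(7)[OF xi yj this] have "xs!j = xs!(?n-1)" "ys!(i-?n) = ys!0" using lx hy by auto
      moreover have "i - ?n < length ys" using a i by auto
      ultimately have "j = ?n - 1" "i - ?n = 0" using dx a assms(4,5)
        by (metis length_greater_0_conv nth_eq_iff_index_eq diff_less zero_less_one)+
      thus "j = Suc i \<or> i = Suc j" using a by auto
    next
      assume "j = Suc i \<or> i = Suc j"
      hence "j = ?n - 1" "i = ?n" using a by auto
      thus "adj E ((xs @ ys) ! i) ((xs @ ys) ! j)" using assms(4,6) lx hy by (simp add: nth_append adj_sym)
    qed
  qed
qed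

lemma induced_path_cong:
  assumes "\<And>x y. x \<in> set p \<Longrightarrow> y \<in> set p \<Longrightarrow> adj E x y = adj E' x y"
  shows "induced_path E p = induced_path E' p"
proof -
  have "\<forall>i<length p. \<forall>j<length p. adj E (p!i) (p!j) = adj E' (p!i) (p!j)"
    using assms by simp
  thus ?thesis unfolding induced_path_def by simp
qed

lemma induced_path_in_vertices:
  assumes "simple_graph V E" "induced_path E ys" "length ys \<ge> 2"
  shows "set ys \<subseteq> V"
proof
  fix x assume "x \<in> set ys"
  then obtain i where i: "i < length ys" "x = ys!i" by (metis in_set_conv_nth)
  show "x \<in> V"
  proof (cases "Suc i < length ys")
    case True
    hence "adj E (ys!i) (ys!Suc i)" using assms(2) by (simp add: induced_path_def)
    thus ?thesis using adj_in_vertices[OF assms(1)] i by blast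
  next
    case False
    hence "i = Suc (i - 1)" "i - 1 < length ys" using i assms(3) by auto
    hence "adj E (ys!(i-1)) (ys!i)" using assms(2) i by (simp add: induced_path_def) 
    thus ?thesis using adj_in_vertices[OF assms(1)] i by blast
  qed
qed

lemma lazy_walk_append:
  assumes "lazy_walk E xs" "lazy_walk E ys" "xs \<noteq> []" "ys \<noteq> []"
    "last xs = hd ys \<or> adj E (last xs) (hd ys)"
  shows "lazy_walk E (xs @ ys)"
  unfolding lazy_walk_def
proof (intro allI impI)
  fix i assume i: "Suc i < length (xs @ ys)"
  let ?n = "length xs"
  have lx: "last xs = xs ! (?n - 1)" using assms(3) by (simp add: last_conv_nth)
  have hy: "hd ys = ys ! 0" using assms(4) by (simp add: hd_conv_nth)
  consider "Suc i < ?n" | "Suc i = ?n" | "i \<ge> ?n" by linarith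
  thus "(xs @ ys) ! i = (xs @ ys) ! Suc i \<or> adj E ((xs @ ys) ! i) ((xs @ ys) ! Suc i)"
  proof cases
    case 1 thus ?thesis using assms(1) by (simp add: nth_append lazy_walk_def)
  next
    case 2 hence "i = ?n - 1" by simp
    thus ?thesis using 2 assms(5) lx hy by (simp add: nth_append)
  next
    case 3
    hence "Suc (i - ?n) < length ys" using i by auto
    hence "ys ! (i - ?n) = ys ! Suc (i - ?n) \<or> adj E (ys ! (i - ?n)) (ys ! Suc (i - ?n))"
      using assms(2) by (simp add: lazy_walk_def)
    moreover have "Suc i - ?n = Suc (i - ?n)" using 3 by auto
    ultimately show ?thesis using 3 by (simp add: nth_append)
  qed
qed

lemma lazy_walk_rev: "lazy_walk E xs \<Longrightarrow> lazy_walk E (rev xs)"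
  unfolding lazy_walk_def
proof (intro allI impI)
  fix i assume a: "\<forall>i. Suc i < length xs \<longrightarrow> xs ! i = xs ! Suc i \<or> adj E (xs ! i) (xs ! Suc i)"
    and i: "Suc i < length (rev xs)"
  let ?k = "length xs - Suc (Suc i)"
  have "Suc ?k < length xs" using i by auto
  hence "xs ! ?k = xs ! Suc ?k \<or> adj E (xs ! ?k) (xs ! Suc ?k)" using a by blast
  moreover have "length xs - Suc i = Suc ?k" using i by auto
  ultimately show "rev xs ! i = rev xs ! Suc i \<or> adj E (rev xs ! i) (rev xs ! Suc i)"
    using i by (auto simp: rev_nth adj_sym)
qed

lemma lazy_walk_take: "lazy_walk E xs \<Longrightarrow> lazy_walk E (take k xs)"
  unfolding lazy_walk_def by auto

lemma lazy_walk_drop: "lazy_walk E xs \<Longrightarrow> lazy_walk E (drop k xs)"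
  unfolding lazy_walk_def by (auto simp: add.commute)

lemma induced_path_lazy_walk: "induced_path E xs \<Longrightarrow> lazy_walk E xs"
  unfolding lazy_walk_def induced_path_def by auto

lemma lazy_walk_singleton: "lazy_walk E [x]" by (simp add: lazy_walk_def)

lemma lazy_walk_between:
  assumes "lazy_walk E xs" "i < length xs" "j < length xs"
  shows "\<exists>ws. lazy_walk E ws \<and> ws \<noteq> [] \<and> hd ws = xs!i \<and> last ws = xs!j \<and> set ws \<subseteq> set xs"
proof (cases "i \<le> j")
  case True
  let ?ws = "take (j - i + 1) (drop i xs)"
  have "lazy_walk E ?ws" using assms by (intro lazy_walk_take lazy_walk_drop)
  moreover have "?ws \<noteq> []" using assms by simp
  moreover have "hd ?ws = xs!i" using assms by (simp add: hd_conv_nth)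
  moreover have "last ?ws = xs!j" using assms True by (simp add: last_conv_nth)
  moreover have "set ?ws \<subseteq> set xs" by (meson in_set_dropD in_set_takeD subsetI)
  ultimately show ?thesis by blast
next
  case False
  let ?ws = "rev (take (i - j + 1) (drop j xs))"
  have "lazy_walk E ?ws" using assms by (intro lazy_walk_rev lazy_walk_take lazy_walk_drop)
  moreover have "?ws \<noteq> []" using assms by simp
  moreover have "hd ?ws = xs!i" using assms False by (simp add: hd_rev last_conv_nth)
  moreover have "last ?ws = xs!j" using assms by (simp add: last_rev hd_conv_nth)
  moreover have "set ?ws \<subseteq> set xs" by (simp add: set_drop_subset set_take_subset_set_take subsetI)
       (meson in_set_dropD in_set_takeD subsetI)
  ultimately show ?thesis by blast
qed

lemma lazy_walk_segment:
  assumes "lazy_walk E q" "a \<le> b" "b < length q"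
  shows "\<exists>ws. lazy_walk E ws \<and> ws \<noteq> [] \<and> hd ws = q!a \<and> last ws = q!b \<and> (\<forall>x\<in>set ws. \<exists>k. a \<le> k \<and> k \<le> b \<and> x = q!k)"
proof -
  let ?ws = "take (b - a + 1) (drop a q)"
  have "lazy_walk E ?ws" using assms(1) by (intro lazy_walk_take lazy_walk_drop)
  moreover have "?ws \<noteq> []" using assms by simp
  moreover have "hd ?ws = q!a" using assms by (simp add: hd_conv_nth)
  moreover have "last ?ws = q!b"
  proof -
    have "length ?ws = b - a + 1" using assms by simp
    hence "last ?ws = ?ws ! (b - a)" using \<open>?ws \<noteq> []\<close> by (simp add: last_conv_nth)
    also have "\<dots> = q!b" using assms by simp
    finally show ?thesis .
  qed
  moreover have "\<forall>x\<in>set ?ws. \<exists>k. a \<le> k \<and> k \<le> b \<and> x = q!k"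
  proof
    fix x assume "x \<in> set ?ws"
    from in_set_segment[OF this] obtain k where "a \<le> k" "k < a + (b - a + 1)" "x = q!k" by blast
    thus "\<exists>k. a \<le> k \<and> k \<le> b \<and> x = q!k" using assms(2) by (intro exI[of _ k]) auto
  qed
  ultimately show ?thesis by blast
qed

lemma lazy_walk_splice:
  assumes "lazy_walk E xs" "k \<le> j" "j < length xs" "0 < k"
    "xs!(k-1) = xs!j \<or> adj E (xs!(k-1)) (xs!j)"
  shows "lazy_walk E (take k xs @ drop j xs)"
proof (rule lazy_walk_append)
  show "lazy_walk E (take k xs)" "lazy_walk E (drop j xs)" using assms(1) by (auto intro: lazy_walk_take lazy_walk_drop)
  show "take k xs \<noteq> []" "drop j xs \<noteq> []" using assms by auto
  have "last (take k xs) = xs!(k-1)" using assms by (subst last_conv_nth) auto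
  moreover have "hd (drop j xs) = xs!j" using assms by (simp add: hd_drop_conv_nth)
  ultimately show "last (take k xs) = hd (drop j xs) \<or> adj E (last (take k xs)) (hd (drop j xs))"
    using assms(5) by simp
qed

lemma induced_pathI_chordless:
  assumes lf: "loopfree E" and xs: "lazy_walk E xs" "distinct xs"
    and chordless: "\<And>i j. Suc i < j \<Longrightarrow> j < length xs \<Longrightarrow> \<not> adj E (xs!i) (xs!j)"
  shows "induced_path E xs"
  unfolding induced_path_def
proof (intro conjI allI impI xs(2))
  fix i j assume i: "i < length xs" and j: "j < length xs"
  show "adj E (xs!i) (xs!j) = (j = Suc i \<or> i = Suc j)"
  proof
    assume a: "adj E (xs!i) (xs!j)"
    have "i \<noteq> j" using a lf loopfree_not_adj by metis
    moreover have "\<not> Suc i < j" "\<not> Suc j < i" using chordless a i j adj_sym by metis+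
    ultimately show "j = Suc i \<or> i = Suc j" by linarith
  next
    have step: "adj E (xs!k) (xs!Suc k)" if "Suc k < length xs" for k
      using xs that nth_eq_iff_index_eq[of xs k "Suc k"] unfolding lazy_walk_def by auto
    assume "j = Suc i \<or> i = Suc j"
    thus "adj E (xs!i) (xs!j)" using step i j adj_sym by metis
  qed
qed

lemma induced_path_in_lazy_walk:
  assumes lf: "loopfree E"
  shows "lazy_walk E xs \<Longrightarrow> xs \<noteq> [] \<Longrightarrow>
    \<exists>ys. induced_path E ys \<and> ys \<noteq> [] \<and> hd ys = hd xs \<and> last ys = last xs \<and> set ys \<subseteq> set xs"
proof (induction "length xs" arbitrary: xs rule: less_induct)
  case less
  have shorten: ?case if "lazy_walk E zs" "zs \<noteq> []" "length zs < length xs"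
    "hd zs = hd xs" "last zs = last xs" "set zs \<subseteq> set xs" for zs
    using less.hyps[OF that(3,1,2)] that(4-6) by (metis subset_trans)
  consider (repeat) i j where "i < j" "j < length xs" "xs!i = xs!j"
    | (chord) i j where "Suc i < j" "j < length xs" "adj E (xs!i) (xs!j)"
    | (induced) "distinct xs" "\<And>i j. Suc i < j \<Longrightarrow> j < length xs \<Longrightarrow> \<not> adj E (xs!i) (xs!j)"
    by (metis distinct_conv_nth linorder_neqE_nat)
  thus ?case
  proof cases
    case (repeat i j)
    show ?thesis
    proof (cases "i = 0")
      case True
      show ?thesis using repeat True less.prems
        by (intro shorten[of "drop j xs"])
          (auto intro: lazy_walk_drop simp: hd_drop_conv_nth hd_conv_nth set_drop_subset)
    next
      case False
      let ?zs = "take i xs @ drop j xs"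
      have "xs!(i-1) = xs!Suc (i-1) \<or> adj E (xs!(i-1)) (xs!Suc (i-1))"
        using less.prems(1) repeat unfolding lazy_walk_def by simp
      hence "lazy_walk E ?zs" using less.prems repeat False by (intro lazy_walk_splice) auto
      moreover have "?zs \<noteq> []" "length ?zs < length xs" using repeat by auto
      moreover have "hd ?zs = hd xs" using False less.prems(2) by (simp add: hd_append hd_take)
      moreover have "last ?zs = last xs" using repeat by simp
      moreover have "set ?zs \<subseteq> set xs" by (auto dest: in_set_takeD in_set_dropD)
      ultimately show ?thesis by (rule shorten)
    qed
  next
    case (chord i j)
    let ?zs = "take (Suc i) xs @ drop j xs"
    have "lazy_walk E ?zs" using less.prems chord by (intro lazy_walk_splice) auto
    moreover have "?zs \<noteq> []" "length ?zs < length xs" using chord by auto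
    moreover have "hd ?zs = hd xs" using less.prems(2) by (simp add: hd_append hd_take)
    moreover have "last ?zs = last xs" using chord by simp
    moreover have "set ?zs \<subseteq> set xs" by (auto dest: in_set_takeD in_set_dropD)
    ultimately show ?thesis by (rule shorten)
  next
    case induced
    thus ?thesis using induced_pathI_chordless[OF lf less.prems(1)] less.prems(2) by blast
  qed
qed

lemma induced_path_to_first:
  assumes lf: "loopfree E" and rs: "lazy_walk E rs" "rs \<noteq> []" "adj E y (hd rs)" "P (last rs)" "\<not> P y"
  shows "\<exists>ys. induced_path E ys \<and> length ys \<ge> 2 \<and> hd ys = y \<and> P (last ys) \<and> set ys \<subseteq> insert y (set rs)
     \<and> (\<forall>x\<in>set ys. P x \<longrightarrow> x = last ys)"
proof -
  have ex: "\<exists>k. k < length rs \<and> P (rs!k)" using rs(2,4) by (metis last_conv_nth diff_less length_greater_0_conv zero_less_one)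
  define k where "k = (LEAST k. k < length rs \<and> P (rs!k))"
  have k: "k < length rs" "P (rs!k)" using LeastI_ex[OF ex] unfolding k_def by auto
  have kmin: "\<not> P (rs!j)" if "j < k" for j using not_less_Least[of j "\<lambda>k. k < length rs \<and> P (rs!k)"] that k
    unfolding k_def by auto
  let ?ws = "y # take (Suc k) rs"
  have "lazy_walk E ?ws"
  proof -
    have "lazy_walk E ([y] @ take (Suc k) rs)"
      using rs by (intro lazy_walk_append lazy_walk_take lazy_walk_singleton) (auto simp: hd_take)
    thus ?thesis by simp
  qed
  moreover have "last ?ws = rs!k" using k by (simp add: take_Suc_conv_app_nth)
  ultimately obtain ys where ys: "induced_path E ys" "ys \<noteq> []" "hd ys = y" "last ys = rs!k" "set ys \<subseteq> set ?ws"
    using induced_path_in_lazy_walk[OF lf, of ?ws] by (metis list.distinct(1) list.sel(1))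
  have st: "set (take (Suc k) rs) = insert (rs!k) (set (take k rs))" using k
    by (simp add: take_Suc_conv_app_nth)
  have npk: "\<not> P x" if "x \<in> set (take k rs)" for x
    using that kmin by (metis in_set_conv_nth length_take min_less_iff_conj nth_take)
  have "length ys \<ge> 2"
  proof (rule ccontr)
    assume "\<not> length ys \<ge> 2"
    moreover have "length ys \<noteq> 0" using ys(2) by simp
    ultimately have "length ys = 1" by linarith
    hence "hd ys = last ys" by (cases ys) (auto simp: length_0_conv)
    thus False using ys(3,4) k rs(5) \<open>\<not> P y\<close> by (metis assms(6))
  qed
  moreover have "\<forall>x\<in>set ys. P x \<longrightarrow> x = last ys"
  proof (intro ballI impI)
    fix x assume x: "x \<in> set ys" "P x"
    hence "x \<in> insert y (insert (rs!k) (set (take k rs)))" using ys(5) st by auto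
    thus "x = last ys" using x(2) npk assms(6) ys(4) by auto
  qed
  moreover have "set ys \<subseteq> insert y (set rs)" using ys(5) by (auto dest: in_set_takeD)
  ultimately show ?thesis using ys k by auto
qed

section \<open>Holes as paths closed by a vertex\<close>

text \<open>A hole through u without u, listed from one neighbour of u to the other.\<close>
definition hole_path :: "'a set set \<Rightarrow> 'a \<Rightarrow> 'a list \<Rightarrow> bool" where
  "hole_path E u q \<longleftrightarrow> induced_path E q \<and> length q \<ge> 3 \<and> u \<notin> set q \<and>
     (\<forall>x\<in>set q. adj E u x \<longleftrightarrow> x = hd q \<or> x = last q)"

lemma mod_add_less_cases: "k < (n::nat) \<Longrightarrow> x \<le> n \<Longrightarrow> (k + x) mod n = (if k + x < n then k + x else k + x - n)"
proof -
  assume a: "k < n" "x \<le> n"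
  show ?thesis
  proof (cases "k + x < n")
    case True thus ?thesis by simp
  next
    case False
    hence "(k + x) mod n = (k + x - n) mod n" by (simp add: le_mod_geq)
    also have "\<dots> = k + x - n" using a by simp
    finally show ?thesis using False by simp
  qed
qed

lemma is_hole_insert_hole_path:
  assumes lf: "loopfree E" and h: "hole_path E u q" and uV: "u \<in> V" and qV: "set q \<subseteq> V"
  shows "is_hole V E (insert u (set q))"
  unfolding is_hole_def
proof (intro exI[of _ "u # q"] conjI allI impI)
  have ip: "induced_path E q" and l3: "length q \<ge> 3" and un: "u \<notin> set q"
    and ua: "\<And>x. x \<in> set q \<Longrightarrow> adj E u x \<longleftrightarrow> x = hd q \<or> x = last q"
    using h by (auto simp: hole_path_def)
  have dq: "distinct q" using ip by (simp add: induced_path_def)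
  show "distinct (u # q)" using un dq by simp
  show "4 \<le> length (u # q)" using l3 by simp
  show "set (u # q) = insert u (set q)" by simp
  show "insert u (set q) \<subseteq> V" using uV qV by simp
  fix i j assume i: "i < length (u # q)" and j: "j < length (u # q)"
  let ?n = "length (u # q)"
  have qne: "q \<noteq> []" using l3 by auto
  have hdq: "hd q = q ! 0" and lq: "last q = q ! (length q - 1)" using qne
    by (auto simp: hd_conv_nth last_conv_nth)
  have uadj: "adj E u (q!m) \<longleftrightarrow> m = 0 \<or> m = length q - 1" if "m < length q" for m
  proof -
    have "adj E u (q!m) \<longleftrightarrow> q!m = q!0 \<or> q!m = q!(length q - 1)" using ua[of "q!m"] that hdq lq by simp
    moreover have "q!m = q!0 \<longleftrightarrow> m = 0" using nth_eq_iff_index_eq[OF dq that, of 0] qne by simp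
    moreover have "q!m = q!(length q - 1) \<longleftrightarrow> m = length q - 1"
      using nth_eq_iff_index_eq[OF dq that, of "length q - 1"] l3 by simp
    ultimately show ?thesis by simp
  qed
  have "{(u # q) ! i, (u # q) ! j} \<in> E \<longleftrightarrow> adj E ((u # q) ! i) ((u # q) ! j)" by (simp add: adj_def)
  also have "\<dots> \<longleftrightarrow> (j = Suc i mod ?n \<or> i = Suc j mod ?n)"
  proof (cases "i = 0"; cases "j = 0")
    assume "i = 0" "j = 0" thus ?thesis using loopfree_not_adj[OF lf, of u] qne by (simp add: mod_Suc)
  next
    assume a: "i = 0" "j \<noteq> 0"
    have "adj E ((u # q) ! i) ((u # q) ! j) = adj E u (q!(j-1))" using a by (simp add: nth_Cons')
    also have "\<dots> = (j - 1 = 0 \<or> j - 1 = length q - 1)" using uadj j a by simp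
    also have "\<dots> = (j = Suc i mod ?n \<or> i = Suc j mod ?n)" using a j l3 by (auto simp: mod_Suc)
    finally show ?thesis .
  next
    assume a: "i \<noteq> 0" "j = 0"
    have "adj E ((u # q) ! i) ((u # q) ! j) = adj E u (q!(i-1))" using a by (simp add: nth_Cons' adj_sym)
    also have "\<dots> = (i - 1 = 0 \<or> i - 1 = length q - 1)" using uadj i a by simp
    also have "\<dots> = (j = Suc i mod ?n \<or> i = Suc j mod ?n)" using a i l3 by (auto simp: mod_Suc)
    finally show ?thesis .
  next
    assume a: "i \<noteq> 0" "j \<noteq> 0"
    have "adj E ((u # q) ! i) ((u # q) ! j) = adj E (q!(i-1)) (q!(j-1))" using a by (simp add: nth_Cons')
    also have "\<dots> = (j - 1 = Suc (i - 1) \<or> i - 1 = Suc (j - 1))" using ip i j a unfolding induced_path_def by auto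
    also have "\<dots> = (j = Suc i mod ?n \<or> i = Suc j mod ?n)" using a i j l3 by (auto simp: mod_Suc)
    finally show ?thesis .
  qed
  finally show "{(u # q) ! i, (u # q) ! j} \<in> E \<longleftrightarrow> (j = Suc i mod ?n \<or> i = Suc j mod ?n)" .
qed

lemma mod_add_eq_mod_add_iff:
  assumes "k < (n::nat)" "x \<le> n" "y \<le> n"
  shows "((k + x) mod n = (k + y) mod n) \<longleftrightarrow> (x = y \<or> (x = 0 \<and> y = n) \<or> (x = n \<and> y = 0))"
proof -
  have "(k + x) mod n = (if k + x < n then k + x else k + x - n)" using mod_add_less_cases assms by blast
  moreover have "(k + y) mod n = (if k + y < n then k + y else k + y - n)" using mod_add_less_cases assms by blast
  ultimately show ?thesis using assms by auto
qed

lemma hole_path_of_hole: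
  assumes hole: "is_hole V E H" and uH: "u \<in> H"
  shows "\<exists>q. hole_path E u q \<and> set q = H - {u}"
proof -
  obtain xs where d: "distinct xs" and l4: "length xs \<ge> 4" and sx: "set xs = H"
    and HI: "\<And>a b. a < length xs \<Longrightarrow> b < length xs \<Longrightarrow>
        adj E (xs!a) (xs!b) \<longleftrightarrow> (b = Suc a mod length xs \<or> a = Suc b mod length xs)"
    using hole unfolding is_hole_def adj_def by blast
  let ?n = "length xs"
  have n0: "0 < ?n" using l4 by auto
  obtain k where k: "k < ?n" "xs!k = u" using uH sx by (metis in_set_conv_nth)
  define q where "q = tl (rotate k xs)"
  have lq: "length q = ?n - 1" by (simp add: q_def)
  have qn: "q!i = xs!((k + Suc i) mod ?n)" if "i < ?n - 1" for i
    using that by (simp add: q_def nth_tl nth_rotate)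
  have dr: "distinct (rotate k xs)" using d by simp
  have dq: "distinct q" using dr by (simp add: q_def distinct_tl)
  have "xs \<noteq> []" using l4 by auto
  hence hdr: "hd (rotate k xs) = u" using k hd_rotate_conv_nth[of xs k] by simp
  have sq: "set q = H - {u}"
  proof -
    have "rotate k xs \<noteq> []" using l4 by auto
    hence "rotate k xs = hd (rotate k xs) # q" by (simp add: q_def)
    hence "set (rotate k xs) = insert u (set q)" "u \<notin> set q" using dr hdr
      by (metis list.simps(15), metis distinct.simps(2))
    thus ?thesis using sx by auto
  qed
  have un: "u \<notin> set q" using sq by simp
  have ai: "(k + Suc i) mod ?n = (if k + Suc i < ?n then k + Suc i else k + Suc i - ?n)"
    if "i < ?n - 1" for i using mod_add_less_cases[OF k(1), of "Suc i"] that by simp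
  have ip: "induced_path E q" unfolding induced_path_def
  proof (intro conjI dq allI impI)
    fix i j assume i: "i < length q" and j: "j < length q"
    let ?a = "(k + Suc i) mod ?n" and ?b = "(k + Suc j) mod ?n"
    have "adj E (q!i) (q!j) = adj E (xs!?a) (xs!?b)" using i j lq qn by simp
    also have "\<dots> = (?b = Suc ?a mod ?n \<or> ?a = Suc ?b mod ?n)" using l4 by (intro HI) (auto intro: mod_less_divisor)
    also have "\<dots> = (j = Suc i \<or> i = Suc j)"
    proof -
      have "Suc ?a mod ?n = (k + Suc (Suc i)) mod ?n" by (simp add: mod_Suc_eq)
      moreover have "Suc ?b mod ?n = (k + Suc (Suc j)) mod ?n" by (simp add: mod_Suc_eq)
      moreover have "(?b = (k + Suc (Suc i)) mod ?n) = (j = Suc i)"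
        using mod_add_eq_mod_add_iff[OF k(1), of "Suc j" "Suc (Suc i)"] i j lq by auto
      moreover have "(?a = (k + Suc (Suc j)) mod ?n) = (i = Suc j)"
        using mod_add_eq_mod_add_iff[OF k(1), of "Suc i" "Suc (Suc j)"] i j lq by auto
      ultimately show ?thesis by simp
    qed
    finally show "adj E (q!i) (q!j) = (j = Suc i \<or> i = Suc j)" .
  qed
  have ua: "adj E u x \<longleftrightarrow> x = hd q \<or> x = last q" if x: "x \<in> set q" for x
  proof -
    obtain i where i: "i < length q" "x = q!i" using x by (metis in_set_conv_nth)
    let ?b = "(k + Suc i) mod ?n"
    have "adj E u x = adj E (xs!k) (xs!?b)" using i k lq qn by simp
    also have "\<dots> = (?b = Suc k mod ?n \<or> k = Suc ?b mod ?n)" using l4 k by (intro HI) (auto intro: mod_less_divisor)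
    also have "\<dots> = (i = 0 \<or> i = length q - 1)"
    proof -
      have "Suc k mod ?n = (k + 1) mod ?n" by simp
      moreover have "Suc ?b mod ?n = (k + Suc (Suc i)) mod ?n" by (simp add: mod_Suc_eq)
      moreover have "k = (k + 0) mod ?n" using k by simp
      moreover have "(?b = (k + 1) mod ?n) = (i = 0)"
        using mod_add_eq_mod_add_iff[OF k(1), of "Suc i" 1] i lq by auto
      moreover have "((k + 0) mod ?n = (k + Suc (Suc i)) mod ?n) = (i = length q - 1)"
        using mod_add_eq_mod_add_iff[OF k(1), of 0 "Suc (Suc i)"] i lq by auto
      ultimately show ?thesis by metis
    qed
    also have "\<dots> = (x = hd q \<or> x = last q)"
    proof -
      have qne: "q \<noteq> []" using lq l4 by auto
      have "x = hd q \<longleftrightarrow> i = 0" using i nth_eq_iff_index_eq[OF dq i(1), of 0] qne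
        by (simp add: hd_conv_nth)
      moreover have "x = last q \<longleftrightarrow> i = length q - 1" using i nth_eq_iff_index_eq[OF dq i(1), of "length q - 1"] qne
        by (simp add: last_conv_nth)
      ultimately show ?thesis by simp
    qed
    finally show ?thesis .
  qed
  have "hole_path E u q" unfolding hole_path_def using ip lq l4 un ua by auto
  thus ?thesis using sq by blast
qed

lemma is_hole_finite: "is_hole V E H \<Longrightarrow> finite H"
  unfolding is_hole_def by auto

lemma is_hole_cong:
  assumes "\<And>x y. x \<in> H \<Longrightarrow> y \<in> H \<Longrightarrow> {x,y} \<in> E \<longleftrightarrow> {x,y} \<in> E'"
  shows "is_hole V E H = is_hole V E' H"
proof -
  have "(\<forall>i < length xs. \<forall>j < length xs. {xs ! i, xs ! j} \<in> E \<longleftrightarrow> {xs ! i, xs ! j} \<in> E') "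
    if "set xs = H" for xs using assms that by auto
  hence "\<And>xs. set xs = H \<Longrightarrow> (\<forall>i < length xs. \<forall>j < length xs.
        {xs ! i, xs ! j} \<in> E \<longleftrightarrow> (j = Suc i mod length xs \<or> i = Suc j mod length xs)) =
       (\<forall>i < length xs. \<forall>j < length xs.
        {xs ! i, xs ! j} \<in> E' \<longleftrightarrow> (j = Suc i mod length xs \<or> i = Suc j mod length xs))"
    by metis
  thus ?thesis unfolding is_hole_def by (intro iff_exI) blast
qed

lemma hole_path_rev: "hole_path E u q \<Longrightarrow> hole_path E u (rev q)"
  unfolding hole_path_def by (auto simp: induced_path_rev hd_rev last_rev)

lemma hole_path_in_vertices: "simple_graph V E \<Longrightarrow> hole_path E u q \<Longrightarrow> set q \<subseteq> V \<and> u \<in> V"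
proof -
  assume sg: "simple_graph V E" and h: "hole_path E u q"
  hence "set q \<subseteq> V" using induced_path_in_vertices[OF sg] unfolding hole_path_def by auto
  moreover have "adj E u (hd q)"
  proof -
    have "q \<noteq> []" using h unfolding hole_path_def by auto
    thus ?thesis using h unfolding hole_path_def by (auto simp: hd_in_set)
  qed
  ultimately show ?thesis using adj_in_vertices[OF sg] by blast
qed

lemma hole_path_is_hole: "simple_graph V E \<Longrightarrow> hole_path E u q \<Longrightarrow> is_hole V E (insert u (set q))"
  using is_hole_insert_hole_path simple_graph_loopfree hole_path_in_vertices by metis

lemma hole_path_adj_Suc: "hole_path E u q \<Longrightarrow> Suc i < length q \<Longrightarrow> adj E (q!i) (q!Suc i)"
  unfolding hole_path_def induced_path_def by auto

lemma hole_path_not_adj: "hole_path E u q \<Longrightarrow> i < length q \<Longrightarrow> j < length q \<Longrightarrow> Suc i < j \<Longrightarrow> \<not> adj E (q!i) (q!j)"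
  unfolding hole_path_def induced_path_def by auto

lemma hole_path_adj_iff: "hole_path E u q \<Longrightarrow> i < length q \<Longrightarrow> adj E u (q!i) \<longleftrightarrow> i = 0 \<or> i = length q - 1"
proof -
  assume h: "hole_path E u q" and i: "i < length q"
  have dq: "distinct q" and l3: "length q \<ge> 3" using h by (auto simp: hole_path_def induced_path_def)
  have qne: "q \<noteq> []" using l3 by auto
  have "adj E u (q!i) \<longleftrightarrow> q!i = hd q \<or> q!i = last q" using h i unfolding hole_path_def by auto
  moreover have "q!i = hd q \<longleftrightarrow> i = 0" using nth_eq_iff_index_eq[OF dq i, of 0] qne
    by (simp add: hd_conv_nth)
  moreover have "q!i = last q \<longleftrightarrow> i = length q - 1" using nth_eq_iff_index_eq[OF dq i, of "length q - 1"] qne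
    by (simp add: last_conv_nth)
  ultimately show ?thesis by simp
qed

lemma hole_path_second:
  assumes "hole_path E u p"
  shows "p!1 \<in> set p \<and> p!1 \<noteq> hd p \<and> p!1 \<noteq> last p \<and> p!1 \<noteq> u"
proof -
  have ip: "induced_path E p" and l3: "length p \<ge> 3" and un: "u \<notin> set p" using assms by (auto simp: hole_path_def)
  have dp: "distinct p" using ip by (simp add: induced_path_def)
  have pne: "p \<noteq> []" using l3 by auto
  have i: "1 < length p" "0 < length p" "length p - 1 < length p" using l3 by auto
  have "p!1 \<noteq> p!0" "p!1 \<noteq> p!(length p - 1)"
    using nth_eq_iff_index_eq[OF dp i(1) i(2)] nth_eq_iff_index_eq[OF dp i(1) i(3)] l3 by auto
  moreover have "p!1 \<in> set p" using i by simp
  ultimately show ?thesis using pne un by (auto simp: hd_conv_nth last_conv_nth)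
qed

lemma hole_path_rev_interior:
  assumes "hole_path E u q" "0 < s" "Suc s < length q"
  obtains s' where "hole_path E u (rev q)" "0 < s'" "Suc s' < length q" "rev q ! s' = q!s"
    "set (drop (Suc s') (rev q)) = set (take s q)"
proof
  let ?s' = "length q - 1 - s"
  show "hole_path E u (rev q)" using assms(1) by (rule hole_path_rev)
  show "0 < ?s'" "Suc ?s' < length q" "rev q ! ?s' = q!s" using assms(2,3) by (auto simp: rev_nth)
  have "Suc ?s' = length q - s" using assms(3) by auto
  thus "set (drop (Suc ?s') (rev q)) = set (take s q)" using assms(3) by (simp add: drop_rev)
qed

lemma hole_path_other_vertex:
  assumes h: "hole_path E u q" and i: "i < length q" and s: "s < length q" "i \<noteq> s"
  shows "q!i \<noteq> u \<and> q!i \<noteq> q!s \<and> (adj E (q!i) (q!s) \<longrightarrow> q!i = q!(s-1) \<or> q!i = q!Suc s)"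
proof -
  have ip: "induced_path E q" and un: "u \<notin> set q" using h by (auto simp: hole_path_def)
  have dq: "distinct q" using ip by (simp add: induced_path_def)
  have "q!i \<noteq> u" using un i by auto
  moreover have "q!i \<noteq> q!s" using nth_eq_iff_index_eq[OF dq i s(1)] s by simp
  moreover have "adj E (q!i) (q!s) \<longrightarrow> q!i = q!(s-1) \<or> q!i = q!Suc s"
    using ip i s unfolding induced_path_def by auto
  ultimately show ?thesis by blast
qed

lemma hole_path_splice:
  assumes h: "hole_path E u q" and r: "0 < r" "r < length q"
    and ys: "induced_path E ys" "length ys \<ge> 2" "adj E (hd ys) (q!r)" "adj E u (last ys)"
      "u \<notin> set ys" "\<And>x. x \<in> set ys \<Longrightarrow> adj E u x \<Longrightarrow> x = last ys"
    and sep: "\<And>x j. x \<in> set ys \<Longrightarrow> r \<le> j \<Longrightarrow> j < length q \<Longrightarrow>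
      x \<noteq> q!j \<and> (adj E x (q!j) \<longrightarrow> x = hd ys \<and> j = r)"
  shows "hole_path E u (rev (drop r q) @ ys)"
proof -
  define D where "D = drop r q"
  have dq: "distinct q" and un: "u \<notin> set q" using h by (auto simp: hole_path_def induced_path_def)
  have Dset: "\<exists>j. r \<le> j \<and> j < length q \<and> x = q!j" if "x \<in> set D" for x
    using in_set_drop_nth that unfolding D_def by metis
  have Dne: "D \<noteq> []" and hdD: "hd D = q!r" and lastD: "last D = last q"
    using r by (auto simp: D_def hd_drop_conv_nth)
  have ysne: "ys \<noteq> []" using ys(2) by auto
  have disj: "set D \<inter> set ys = {}" using Dset sep by blast
  have ipP: "induced_path E (rev D @ ys)"
  proof (rule induced_path_append)
    show "induced_path E (rev D)"
      using h unfolding D_def hole_path_def by (intro induced_path_rev induced_path_drop) auto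
    show "adj E (last (rev D)) (hd ys)" using hdD Dne ys(3) by (simp add: last_rev adj_sym)
    fix x z assume "x \<in> set (rev D)" "z \<in> set ys" "adj E x z"
    thus "x = last (rev D) \<and> z = hd ys" using Dset sep hdD Dne by (fastforce simp: last_rev adj_sym)
  qed (use ys(1) disj Dne ysne in auto)
  show ?thesis unfolding hole_path_def D_def[symmetric]
  proof (intro conjI ipP ballI)
    show "3 \<le> length (rev D @ ys)" using ys(2) Dne by (cases D) auto
    show "u \<notin> set (rev D @ ys)" using un ys(5) by (auto simp: D_def dest: in_set_dropD)
    fix x assume x: "x \<in> set (rev D @ ys)"
    have hdP: "hd (rev D @ ys) = last q" and lastP: "last (rev D @ ys) = last ys"
      using Dne lastD ysne by (auto simp: hd_rev)
    show "adj E u x \<longleftrightarrow> x = hd (rev D @ ys) \<or> x = last (rev D @ ys)"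
    proof (cases "x \<in> set D")
      case True
      obtain j where j: "r \<le> j" "j < length q" "x = q!j" using Dset True by blast
      have "adj E u x \<longleftrightarrow> j = length q - 1" using hole_path_adj_iff[OF h j(2)] j r by auto
      also have "\<dots> \<longleftrightarrow> x = last q"
      proof -
        have "q \<noteq> []" "length q - 1 < length q" using r by auto
        thus ?thesis using j nth_eq_iff_index_eq[OF dq j(2), of "length q - 1"] by (auto simp: last_conv_nth)
      qed
      finally show ?thesis using hdP lastP True disj ysne by auto
    next
      case False
      hence "x \<in> set ys" using x by simp
      moreover have "last q \<in> set D" using lastD Dne by (metis last_in_set)
      ultimately show ?thesis using ys(4,6) hdP lastP False by auto
    qed
  qed
qed

section \<open>Consequences of the NC property\<close>

lemma NC_vertex_hole_path_triple:
  assumes sg: "simple_graph V E" and h: "hole_path E u q" and k: "0 < k" "Suc k < length q"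
    and H': "is_hole V E H'" "q!(k-1) \<in> H'" "q!k \<in> H'" "q!Suc k \<in> H'"
    and nc: "NC_vertex V E c" and c: "c \<in> insert u (set q) \<longleftrightarrow> c \<notin> H'"
  shows False
proof -
  have dq: "distinct q" using h by (simp add: hole_path_def induced_path_def)
  have "q!(k-1) \<noteq> q!Suc k" using nth_eq_iff_index_eq[OF dq, of "k-1" "Suc k"] k by auto
  moreover have "adj E (q!(k-1)) (q!k)" "adj E (q!k) (q!Suc k)"
    using hole_path_adj_Suc[OF h, of "k-1"] hole_path_adj_Suc[OF h, of k] k by auto
  moreover have "q!(k-1) \<in> set q" "q!k \<in> set q" "q!Suc k \<in> set q" using k by auto
  ultimately have "share_consec_edges E (insert u (set q)) H'" "share_consec_edges E H' (insert u (set q))"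
    unfolding share_consec_edges_def hole_edges_def using H'(2-4)
    by (intro exI[of _ "q!(k-1)"] exI[of _ "q!k"] exI[of _ "q!Suc k"]; auto simp: adj_def)+
  moreover have "is_hole V E (insert u (set q))" by (rule hole_path_is_hole[OF sg h])
  ultimately show False using nc c H'(1) unfolding NC_vertex_def holes_at_def holes_def by blast
qed

text \<open>A shortest such detour, closed up by q!s, would be a hole avoiding u that shares the two
  edges at q!s with the hole through u.\<close>
lemma NC_no_detour:
  assumes sg: "simple_graph V E" and nc: "NC_vertex V E u" and h: "hole_path E u q"
    and s: "0 < s" "Suc s < length q"
    and ws: "lazy_walk E ws" "ws \<noteq> []" "hd ws = q!(s-1)" "last ws = q!(Suc s)"
    and al: "\<And>x. x \<in> set ws \<Longrightarrow> x \<noteq> u \<and> x \<noteq> q!s \<and> (adj E x (q!s) \<longrightarrow> x = q!(s-1) \<or> x = q!Suc s)"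
  shows False
proof -
  have lf: "loopfree E" using sg by (rule simple_graph_loopfree)
  obtain ys where ys: "induced_path E ys" "ys \<noteq> []" "hd ys = q!(s-1)" "last ys = q!Suc s" "set ys \<subseteq> set ws"
    using induced_path_in_lazy_walk[OF lf ws(1,2)] ws(3,4) by metis
  let ?z = "q!s"
  have dq: "distinct q" using h by (simp add: hole_path_def induced_path_def)
  have ne: "q!(s-1) \<noteq> q!Suc s" using dq s nth_eq_iff_index_eq by fastforce
  have na: "\<not> adj E (q!(s-1)) (q!Suc s)" using hole_path_not_adj[OF h, of "s-1" "Suc s"] s by auto
  have a1: "adj E (q!(s-1)) ?z" using hole_path_adj_Suc[OF h, of "s-1"] s by auto
  have a2: "adj E ?z (q!Suc s)" using hole_path_adj_Suc[OF h, of s] s by auto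
  have l3: "length ys \<ge> 3"
  proof (rule ccontr)
    assume "\<not> length ys \<ge> 3"
    moreover have "length ys \<noteq> 0" using ys(2) by simp
    moreover have "length ys \<noteq> 1" using ys(2-4) ne by (metis One_nat_def hd_conv_nth last_conv_nth diff_self_eq_0)
    moreover have "length ys \<noteq> 2"
    proof
      assume l2: "length ys = 2"
      hence "adj E (ys!0) (ys!1)" using ys(1) by (simp add: induced_path_def)
      moreover have "ys!0 = q!(s-1)" "ys!1 = q!Suc s" using ys(2-4) l2
        by (auto simp: hd_conv_nth last_conv_nth)
      ultimately show False using na by simp
    qed
    ultimately show False by linarith
  qed
  have zn: "?z \<notin> set ys" using al ys(5) by blast
  have hz: "hole_path E ?z ys" unfolding hole_path_def
  proof (intro conjI ys(1) l3 zn ballI)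
    fix x assume x: "x \<in> set ys"
    show "adj E ?z x \<longleftrightarrow> x = hd ys \<or> x = last ys"
    proof
      assume "adj E ?z x"
      hence "adj E x ?z" by (simp add: adj_sym)
      moreover have "x \<in> set ws" using x ys(5) by auto
      ultimately have "x = q!(s-1) \<or> x = q!Suc s" using al[of x] by blast
      thus "x = hd ys \<or> x = last ys" using ys(3,4) by simp
    next
      assume "x = hd ys \<or> x = last ys"
      thus "adj E ?z x" using ys(3,4) a1 a2 by (auto simp: adj_sym)
    qed
  qed
  have H'h: "is_hole V E (insert ?z (set ys))" by (rule hole_path_is_hole[OF sg hz])
  have "u \<notin> set q" using h by (simp add: hole_path_def)
  hence "u \<notin> insert ?z (set ys)" using s al ys(5) by auto
  moreover have "q!(s-1) \<in> set ys" "q!Suc s \<in> set ys" using ys(2-4) by (metis hd_in_set, metis last_in_set)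
  ultimately show False using NC_vertex_hole_path_triple[OF sg h s H'h _ _ _ nc] by auto
qed

definition touches :: "'a set set \<Rightarrow> 'a list \<Rightarrow> 'a set \<Rightarrow> bool" where
  "touches E rs A \<longleftrightarrow> (\<exists>x\<in>set rs. \<exists>z\<in>A. x = z \<or> adj E x z)"

text \<open>Going along the hole on both sides, such a walk yields a detour from q!(s-1) to q!(s+1).\<close>
lemma NC_no_detour_touching:
  assumes sg: "simple_graph V E" and nc: "NC_vertex V E u" and h: "hole_path E u q"
    and s: "0 < s" "Suc s < length q"
    and rs: "lazy_walk E rs" "rs \<noteq> []"
    and av: "\<And>x. x \<in> set rs \<Longrightarrow> x \<noteq> u \<and> x \<noteq> q!s \<and> \<not> adj E x (q!s)"
    and tL: "touches E rs (set (take s q))" and tR: "touches E rs (set (drop (Suc s) q))"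
  shows False
proof -
    let ?T = "take s q" and ?R = "drop (Suc s) q"
    obtain x1 z1 where xz1: "x1 \<in> set rs" "z1 \<in> set ?T" "x1 = z1 \<or> adj E x1 z1"
      using tL unfolding touches_def by blast
    obtain x2 z2 where xz2: "x2 \<in> set rs" "z2 \<in> set ?R" "x2 = z2 \<or> adj E x2 z2"
      using tR unfolding touches_def by blast
    have lT: "length ?T = s" using s by simp
    obtain i1 where i1: "i1 < length ?T" "z1 = ?T!i1" using xz1(2) by (auto simp: in_set_conv_nth)
    obtain i2 where i2: "i2 < length ?R" "z2 = ?R!i2" using xz2(2) by (auto simp: in_set_conv_nth)
    obtain k1 where k1: "k1 < length rs" "x1 = rs!k1" using xz1(1) by (auto simp: in_set_conv_nth)
    obtain k2 where k2: "k2 < length rs" "x2 = rs!k2" using xz2(1) by (auto simp: in_set_conv_nth)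
    have ipq: "induced_path E q" using h by (simp add: hole_path_def)
    obtain w1 where w1: "lazy_walk E w1" "w1 \<noteq> []" "hd w1 = ?T!(s-1)" "last w1 = ?T!i1" "set w1 \<subseteq> set ?T"
      using lazy_walk_between[of E ?T "s-1" i1] i1 lT s ipq by (auto intro: lazy_walk_take induced_path_lazy_walk)
    obtain w2 where w2: "lazy_walk E w2" "w2 \<noteq> []" "hd w2 = rs!k1" "last w2 = rs!k2" "set w2 \<subseteq> set rs"
      using lazy_walk_between[OF rs(1) k1(1) k2(1)] by blast
    have lR: "0 < length ?R" using s by simp
    obtain w3 where w3: "lazy_walk E w3" "w3 \<noteq> []" "hd w3 = ?R!i2" "last w3 = ?R!0" "set w3 \<subseteq> set ?R"
      using lazy_walk_between[of E ?R i2 0] i2 lR ipq by (auto intro: lazy_walk_drop induced_path_lazy_walk)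
    let ?W = "w1 @ w2 @ w3"
    have W: "lazy_walk E ?W"
    proof (rule lazy_walk_append[OF w1(1) _ w1(2)])
      show "lazy_walk E (w2 @ w3)"
        using w2 w3 xz2(3) k2 i2 by (intro lazy_walk_append) auto
      show "w2 @ w3 \<noteq> []" using w2 by simp
      show "last w1 = hd (w2 @ w3) \<or> adj E (last w1) (hd (w2 @ w3))"
        using w1(4) w2(2,3) xz1(3) k1 i1 by (auto simp: adj_sym)
    qed
    have hdW: "hd ?W = q!(s-1)" using w1 s by simp
    have lastW: "last ?W = q!Suc s" using w3 s by simp
    have al: "x \<noteq> u \<and> x \<noteq> q!s \<and> (adj E x (q!s) \<longrightarrow> x = q!(s-1) \<or> x = q!Suc s)"
      if x: "x \<in> set ?W" for x
    proof -
      have "x \<in> set ?T \<or> x \<in> set rs \<or> x \<in> set ?R" using x w1(5) w2(5) w3(5) by auto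
      thus ?thesis
      proof (elim disjE)
        assume "x \<in> set ?T"
        then obtain i where "i < s" "i < length q" "x = q!i" using in_set_take_nth by metis
        thus ?thesis using hole_path_other_vertex[OF h, of i s] s by auto
      next
        assume "x \<in> set rs" thus ?thesis using av by blast
      next
        assume "x \<in> set ?R"
        then obtain i where "Suc s \<le> i" "i < length q" "x = q!i" using in_set_drop_nth by metis
        thus ?thesis using hole_path_other_vertex[OF h, of i s] s by auto
      qed
    qed
    have "?W \<noteq> []" using w1 by simp
    from NC_no_detour[OF sg nc h s W this hdW lastW al] show False .
qed

text \<open>Walk along rs from y to the first neighbour of u and continue backwards from the last
  neighbour of y on the part of the hole beyond q!s; this gives a hole through u and y.\<close>
lemma hole_through_detour_right:
  assumes sg: "simple_graph V E" and h: "hole_path E u q" and s: "0 < s" "Suc s < length q"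
    and y: "adj E y (q!s)" "y \<notin> set q" "y \<noteq> u" "\<not> adj E u y"
    and rs: "lazy_walk E rs" "rs \<noteq> []" "adj E y (hd rs)" "adj E u (last rs)"
    and av: "\<And>x. x \<in> set rs \<Longrightarrow> x \<noteq> u \<and> x \<noteq> q!s \<and> \<not> adj E x (q!s)"
    and nt: "\<not> touches E rs (set (drop (Suc s) q))"
  shows "\<exists>H. is_hole V E H \<and> u \<in> H \<and> y \<in> H"
proof -
  have lf: "loopfree E" using sg by (rule simple_graph_loopfree)
  obtain ys where ys: "induced_path E ys" "length ys \<ge> 2" "hd ys = y" "adj E u (last ys)"
    "set ys \<subseteq> insert y (set rs)" "\<And>x. x \<in> set ys \<Longrightarrow> adj E u x \<Longrightarrow> x = last ys"
    using induced_path_to_first[OF lf rs(1,2,3), of "adj E u"] rs(4) y(4) by blast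
  define r where "r = (GREATEST j. j < length q \<and> s \<le> j \<and> adj E y (q!j))"
  have rP: "r < length q" "s \<le> r" "adj E y (q!r)"
    using GreatestI_nat[of "\<lambda>j. j < length q \<and> s \<le> j \<and> adj E y (q!j)" s "length q"] y(1) s
    unfolding r_def by auto
  have rmax: "j \<le> r" if "j < length q" "s \<le> j" "adj E y (q!j)" for j
    unfolding r_def by (rule Greatest_le_nat[of _ j "length q"]) (use that in auto)
  have rs_far: "x \<noteq> q!j \<and> \<not> adj E x (q!j)" if "x \<in> set rs" "r \<le> j" "j < length q" for x j
  proof (cases "j = s")
    case True thus ?thesis using av[OF that(1)] by blast
  next
    case False
    hence "Suc s \<le> j" using that(2) rP(2) by auto
    hence "drop (Suc s) q ! (j - Suc s) = q!j" "j - Suc s < length (drop (Suc s) q)" using that(3) by auto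
    hence "q!j \<in> set (drop (Suc s) q)" by (metis nth_mem)
    thus ?thesis using nt that(1) unfolding touches_def by blast
  qed
  have "hole_path E u (rev (drop r q) @ ys)"
  proof (rule hole_path_splice[OF h _ rP(1) ys(1,2) _ ys(4) _ ys(6)])
    show "0 < r" "adj E (hd ys) (q!r)" using s rP ys(3) by auto
    show "u \<notin> set ys" using ys(5) y(3) av by auto
    fix x j assume x: "x \<in> set ys" and j: "r \<le> j" "j < length q"
    show "x \<noteq> q!j \<and> (adj E x (q!j) \<longrightarrow> x = hd ys \<and> j = r)"
    proof (cases "x = y")
      case True thus ?thesis using y(2) j rmax[of j] rP(2) ys(3) by auto
    next
      case False thus ?thesis using x ys(5) rs_far[OF _ j] by auto
    qed
  qed
  hence "is_hole V E (insert u (set (rev (drop r q) @ ys)))" by (rule hole_path_is_hole[OF sg])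
  moreover have "y \<in> set ys" using ys(2,3) by (metis hd_in_set list.size(3) not_numeral_le_zero)
  ultimately show ?thesis by (intro exI[of _ "insert u (set (rev (drop r q) @ ys))"]) auto
qed

lemma hole_through_detour:
  assumes sg: "simple_graph V E" and nc: "NC_vertex V E u" and h: "hole_path E u q"
    and s: "0 < s" "Suc s < length q"
    and y: "adj E y (q!s)" "y \<notin> set q" "y \<noteq> u" "\<not> adj E u y"
    and rs: "lazy_walk E rs" "rs \<noteq> []" "adj E y (hd rs)" "adj E u (last rs)"
    and av: "\<And>x. x \<in> set rs \<Longrightarrow> x \<noteq> u \<and> x \<noteq> q!s \<and> \<not> adj E x (q!s)"
  shows "\<exists>H. is_hole V E H \<and> u \<in> H \<and> y \<in> H"
proof (cases "touches E rs (set (drop (Suc s) q))")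
  case False thus ?thesis using hole_through_detour_right[OF sg h s y rs av] by blast
next
  case True
  hence "\<not> touches E rs (set (take s q))" using NC_no_detour_touching[OF sg nc h s rs(1,2) av] by blast
  moreover obtain s' where "hole_path E u (rev q)" "0 < s'" "Suc s' < length (rev q)" "rev q ! s' = q!s"
    "set (drop (Suc s') (rev q)) = set (take s q)"
    using hole_path_rev_interior[OF h s] by auto
  moreover have "y \<notin> set (rev q)" using y(2) by simp
  ultimately show ?thesis using hole_through_detour_right[OF sg, of u "rev q" s' y rs] y rs av
    unfolding touches_def by auto
qed

lemma maximal_run_around:
  assumes "Q (q!0)" "Q (q!(length q - 1))" "\<not> Q (q!iv)" "iv < length q"
  shows "\<exists>i' i. i' < iv \<and> iv < i \<and> i < length q \<and> Q (q!i') \<and> Q (q!i) \<and> (\<forall>k. i' < k \<and> k < i \<longrightarrow> \<not> Q (q!k))"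
proof -
  have iv0: "iv \<noteq> 0" using assms(1,3) by (metis)
  have ivl: "iv \<noteq> length q - 1" using assms by auto
  hence ivl': "iv < length q - 1" using assms(4) by simp
  have ex1: "\<exists>i. iv < i \<and> i < length q \<and> Q (q!i)" using ivl' assms(2) by (intro exI[of _ "length q - 1"]) auto
  define i where "i = (LEAST i. iv < i \<and> i < length q \<and> Q (q!i))"
  have i: "iv < i \<and> i < length q \<and> Q (q!i)" unfolding i_def by (rule LeastI_ex[OF ex1])
  have imin: "\<not> (iv < k \<and> k < length q \<and> Q (q!k))" if "k < i" for k
    using not_less_Least[of k "\<lambda>i. iv < i \<and> i < length q \<and> Q (q!i)"] that unfolding i_def by blast
  define i' where "i' = (GREATEST i. i < iv \<and> Q (q!i))"
  have i': "i' < iv \<and> Q (q!i')"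
    unfolding i'_def by (rule GreatestI_nat[of _ 0 iv]) (use iv0 assms(1) in auto)
  have imax: "k \<le> i'" if "k < iv" "Q (q!k)" for k
    unfolding i'_def by (rule Greatest_le_nat[of _ k iv]) (use that in auto)
  have "\<forall>k. i' < k \<and> k < i \<longrightarrow> \<not> Q (q!k)"
  proof (intro allI impI)
    fix k assume k: "i' < k \<and> k < i"
    show "\<not> Q (q!k)"
    proof (cases "k < iv")
      case True thus ?thesis using imax[of k] k by auto
    next
      case False
      show ?thesis
      proof (cases "k = iv")
        case True thus ?thesis using assms(3) by simp
      next
        case False
        hence "iv < k" using \<open>\<not> k < iv\<close> by simp
        thus ?thesis using imin[of k] k i by auto
      qed
    qed
  qed
  thus ?thesis using i i' by blast
qed

lemma lazy_walk_out_of_run: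
  assumes q: "lazy_walk E q" and idx: "i' < iv" "iv < i" "i < length q"
    and Zk: "\<And>k. i' < k \<Longrightarrow> k < i \<Longrightarrow> Z (q!k)" and c: "c = i' \<or> c = i"
  shows "\<exists>ws. lazy_walk E ws \<and> ws \<noteq> [] \<and> hd ws = q!iv \<and> last ws = q!c \<and> (\<forall>x\<in>set ws. x = q!c \<or> Z x)"
  using c
proof
  assume c: "c = i'"
  obtain ws where ws: "lazy_walk E ws" "ws \<noteq> []" "hd ws = q!i'" "last ws = q!iv"
    "\<forall>x\<in>set ws. \<exists>k. i' \<le> k \<and> k \<le> iv \<and> x = q!k"
    using lazy_walk_segment[OF q, of i' iv] idx by auto
  have "lazy_walk E (rev ws)" using ws(1) by (rule lazy_walk_rev)
  moreover have "rev ws \<noteq> []" "hd (rev ws) = q!iv" "last (rev ws) = q!c" using ws c by (auto simp: hd_rev last_rev)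
  moreover have "\<forall>x\<in>set (rev ws). x = q!c \<or> Z x"
  proof
    fix x assume "x \<in> set (rev ws)"
    then obtain k where k: "i' \<le> k" "k \<le> iv" "x = q!k" using ws(5) by auto
    show "x = q!c \<or> Z x"
    proof (cases "k = i'")
      case True thus ?thesis using k c by simp
    next
      case False thus ?thesis using Zk[of k] k idx by auto
    qed
  qed
  ultimately show ?thesis by blast
next
  assume c: "c = i"
  obtain ws where ws: "lazy_walk E ws" "ws \<noteq> []" "hd ws = q!iv" "last ws = q!i"
    "\<forall>x\<in>set ws. \<exists>k. iv \<le> k \<and> k \<le> i \<and> x = q!k"
    using lazy_walk_segment[OF q, of iv i] idx by auto
  moreover have "\<forall>x\<in>set ws. x = q!c \<or> Z x"
  proof
    fix x assume "x \<in> set ws"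
    then obtain k where k: "iv \<le> k" "k \<le> i" "x = q!k" using ws(5) by auto
    show "x = q!c \<or> Z x"
    proof (cases "k = i")
      case True thus ?thesis using k c by simp
    next
      case False thus ?thesis using Zk[of k] k idx by auto
    qed
  qed
  ultimately show ?thesis using c by blast
qed

lemma hole_path_segment:
  assumes ipq: "induced_path E q" and wq: "w \<notin> set q"
    and idx: "Suc i' < i" "i < length q"
    and aw: "adj E w (q!i')" "adj E w (q!i)"
    and int: "\<And>k. i' < k \<Longrightarrow> k < i \<Longrightarrow> \<not> adj E w (q!k)"
  shows "hole_path E w (take (i - i' + 1) (drop i' q))"
proof -
  define S where "S = take (i - i' + 1) (drop i' q)"
  have dq: "distinct q" using ipq by (simp add: induced_path_def)
  have lS: "length S = i - i' + 1" using idx by (simp add: S_def)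
  have Sn: "S!k = q!(i'+k)" if "k \<le> i - i'" for k using that idx by (simp add: S_def)
  have Sne: "S \<noteq> []" using lS by auto
  have hdS: "hd S = q!i'" using Sn[of 0] Sne by (simp add: hd_conv_nth)
  have lastS: "last S = q!i" using Sn[of "i - i'"] Sne lS idx by (simp add: last_conv_nth)
  have "hole_path E w S" unfolding hole_path_def
  proof (intro conjI ballI)
    show "induced_path E S" unfolding S_def by (intro induced_path_take induced_path_drop ipq)
    show "3 \<le> length S" using lS idx by simp
    show "w \<notin> set S" using wq by (auto simp: S_def dest: in_set_takeD in_set_dropD)
    fix x assume "x \<in> set S"
    from in_set_segment[OF this[unfolded S_def]]
    obtain k where k: "i' \<le> k" "k \<le> i" "x = q!k" using idx by auto
    show "adj E w x \<longleftrightarrow> x = hd S \<or> x = last S"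
    proof (cases "k = i' \<or> k = i")
      case True thus ?thesis using k aw hdS lastS by auto
    next
      case False
      have "x \<noteq> q!i'" "x \<noteq> q!i"
        using nth_eq_iff_index_eq[OF dq, of k i'] nth_eq_iff_index_eq[OF dq, of k i] k idx False by auto
      thus ?thesis using int[of k] k False hdS lastS by auto
    qed
  qed
  thus ?thesis unfolding S_def .
qed

text \<open>If w were adjacent to both ends of a run of the hole through u avoiding its
  neighbourhood, the run would close a hole through w sharing two consecutive edges with the hole
  through u.\<close>
lemma NC_not_adj_run_ends:
  assumes sg: "simple_graph V E" and ncw: "NC_vertex V E w" and h: "hole_path E u q"
    and wq: "w \<notin> set q" and wu: "w \<noteq> u"
    and idx: "i' < iv" "iv < i" "i < length q"
    and aw: "adj E w (q!i')" "adj E w (q!i)"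
    and int: "\<And>k. i' < k \<Longrightarrow> k < i \<Longrightarrow> \<not> adj E w (q!k)"
  shows False
proof -
  define S where "S = take (i - i' + 1) (drop i' q)"
  have "induced_path E q" using h by (simp add: hole_path_def)
  hence "hole_path E w S" using hole_path_segment[OF _ wq _ idx(3) aw int] idx unfolding S_def by simp
  hence H': "is_hole V E (insert w (set S))" by (rule hole_path_is_hole[OF sg])
  have "q!m \<in> set S" if "i' \<le> m" "m \<le> i" for m
  proof -
    have "S!(m - i') = q!m" "m - i' < length S" using that idx by (auto simp: S_def)
    thus ?thesis by (metis nth_mem)
  qed
  hence "q!(iv-1) \<in> set S" "q!iv \<in> set S" "q!Suc iv \<in> set S" using idx by auto
  moreover have "0 < iv" "Suc iv < length q" using idx by auto
  ultimately show False using NC_vertex_hole_path_triple[OF sg h _ _ H' _ _ _ ncw] wq wu by auto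
qed

section \<open>Local chordalization at an NC vertex\<close>

definition hole_nbrs :: "'a set \<Rightarrow> 'a set set \<Rightarrow> 'a \<Rightarrow> 'a set" where
  "hole_nbrs V E u = {x. x \<noteq> u \<and> (\<exists>H\<in>holes_at V E u. x \<in> H)}"

lemma adj_local_chordalize: "adj (local_chordalize V E u) x y \<longleftrightarrow>
    adj E x y \<or> (x = u \<and> y \<in> hole_nbrs V E u) \<or> (y = u \<and> x \<in> hole_nbrs V E u)"
  unfolding adj_def local_chordalize_def hole_nbrs_def
  by (auto simp: doubleton_eq_iff)

lemma adj_local_chordalize_other: "x \<noteq> u \<Longrightarrow> y \<noteq> u \<Longrightarrow> adj (local_chordalize V E u) x y \<longleftrightarrow> adj E x y"
  using adj_local_chordalize by metis

lemma simple_graph_local_chordalize: assumes sg: "simple_graph V E" shows "simple_graph V (local_chordalize V E u)"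
  unfolding simple_graph_def
proof (intro conjI ballI)
  show "finite V" using sg by (simp add: simple_graph_def)
  fix e assume e: "e \<in> local_chordalize V E u"
  show "\<exists>x y. e = {x, y} \<and> x \<noteq> y \<and> x \<in> V \<and> y \<in> V"
  proof (cases "e \<in> E")
    case True thus ?thesis using sg by (simp add: simple_graph_def)
  next
    case False
    then obtain w H where w: "e = {u, w}" "w \<noteq> u" "H \<in> holes_at V E u" "w \<in> H"
      using e unfolding local_chordalize_def by blast
    have "H \<subseteq> V" "u \<in> H" using w(3) unfolding holes_at_def holes_def is_hole_def by auto
    thus ?thesis using w by blast
  qed
qed

lemma hole_nbrsI: "is_hole V E H \<Longrightarrow> u \<in> H \<Longrightarrow> y \<in> H \<Longrightarrow> y \<noteq> u \<Longrightarrow> y \<in> hole_nbrs V E u"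
  unfolding hole_nbrs_def holes_at_def holes_def by auto

lemma hole_nbr_interior:
  assumes "a \<in> hole_nbrs V E u" "\<not> adj E u a"
  obtains q s where "hole_path E u q" "set q \<subseteq> hole_nbrs V E u" "0 < s" "Suc s < length q" "q!s = a"
proof -
  obtain Ha where Ha: "Ha \<in> holes_at V E u" "a \<in> Ha" "a \<noteq> u"
    using assms(1) unfolding hole_nbrs_def by blast
  hence Hah: "is_hole V E Ha" "u \<in> Ha" by (auto simp: holes_at_def holes_def)
  obtain q where q: "hole_path E u q" "set q = Ha - {u}" using hole_path_of_hole[OF Hah] by blast
  obtain s where s: "s < length q" "q!s = a" using q(2) Ha(2,3) by (metis Diff_iff in_set_conv_nth singletonD)
  have "set q \<subseteq> hole_nbrs V E u" using q(2) hole_nbrsI[OF Hah] by blast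
  moreover have "0 < s" "Suc s < length q" using hole_path_adj_iff[OF q(1) s(1)] s assms(2) by auto
  ultimately show thesis using that q(1) s(2) by blast
qed

lemma detour_hole_nbr:
  assumes sg: "simple_graph V E" and nc: "NC_vertex V E u"
    and a: "a \<in> hole_nbrs V E u" "\<not> adj E u a"
    and y: "adj E y a" "y \<noteq> u" "\<not> adj E u y"
    and rs: "lazy_walk E rs" "rs \<noteq> []" "adj E y (hd rs)" "adj E u (last rs)"
    and av: "\<And>x. x \<in> set rs \<Longrightarrow> x \<noteq> u \<and> x \<noteq> a \<and> \<not> adj E x a"
  shows "y \<in> hole_nbrs V E u"
proof (rule ccontr)
  assume yN: "y \<notin> hole_nbrs V E u"
  obtain q s where q: "hole_path E u q" "set q \<subseteq> hole_nbrs V E u" "0 < s" "Suc s < length q" "q!s = a"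
    using hole_nbr_interior[OF a] .
  have "y \<notin> set q" using q(2) yN by blast
  then obtain H where "is_hole V E H" "u \<in> H" "y \<in> H"
    using hole_through_detour[OF sg nc q(1) q(3,4), of y rs] y rs av q(5) by blast
  thus False using yN y(2) hole_nbrsI by metis
qed

lemma walk_from_hole_nbr:
  assumes sg: "simple_graph V E" and nc: "NC_vertex V E u"
    and b: "b \<in> hole_nbrs V E u" "\<not> adj E u b" and a: "a \<noteq> u" "a \<noteq> b" "\<not> adj E a b"
  obtains R where "lazy_walk E R" "R \<noteq> []" "adj E b (hd R)" "adj E u (last R)"
    "\<And>x. x \<in> set R \<Longrightarrow> x \<noteq> u \<and> x \<noteq> a \<and> \<not> adj E x a"
proof -
  obtain g t where g: "hole_path E u g" "0 < t" "Suc t < length g" "g!t = b"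
    using hole_nbr_interior[OF b] by metis
  have a_avoids: "x \<noteq> u \<and> x \<noteq> g!t \<and> \<not> adj E x (g!t)" if "x \<in> set [a]" for x
    using that a g(4) by simp
  \<comment> \<open>By the NC property a cannot touch both sides of b on the hole, so after possibly
    reversing the hole, the side after b is untouched.\<close>
  have "\<exists>g' t'. hole_path E u g' \<and> 0 < t' \<and> Suc t' < length g' \<and> g'!t' = b \<and>
      \<not> touches E [a] (set (drop (Suc t') g'))"
  proof (cases "touches E [a] (set (drop (Suc t) g))")
    case False thus ?thesis using g by blast
  next
    case True
    hence "\<not> touches E [a] (set (take t g))"
      using NC_no_detour_touching[OF sg nc g(1-3) lazy_walk_singleton _ a_avoids] by auto
    moreover obtain s' where "hole_path E u (rev g)" "0 < s'" "Suc s' < length (rev g)"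
      "rev g ! s' = b" "set (drop (Suc s') (rev g)) = set (take t g)"
      using hole_path_rev_interior[OF g(1-3)] g(4) by auto
    ultimately show ?thesis unfolding touches_def by metis
  qed
  then obtain g' t' where g': "hole_path E u g'" "0 < t'" "Suc t' < length g'" "g'!t' = b"
    "\<not> touches E [a] (set (drop (Suc t') g'))" by blast
  define R where "R = drop (Suc t') g'"
  have ipg: "induced_path E g'" "u \<notin> set g'" "length g' \<ge> 3" using g'(1) by (auto simp: hole_path_def)
  have "lazy_walk E R" unfolding R_def by (intro lazy_walk_drop induced_path_lazy_walk ipg(1))
  moreover have "R \<noteq> []" using g' by (simp add: R_def)
  moreover have "adj E b (hd R)"
    using hole_path_adj_Suc[OF g'(1) g'(3)] g'(3,4) by (simp add: R_def hd_drop_conv_nth)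
  moreover have "adj E u (last R)"
  proof -
    have "last g' \<in> set g'" using ipg(3) by (metis last_in_set list.size(3) not_numeral_le_zero)
    hence "adj E u (last g')" using g'(1) unfolding hole_path_def by blast
    thus ?thesis using g'(3) by (simp add: R_def)
  qed
  moreover have "x \<noteq> u \<and> x \<noteq> a \<and> \<not> adj E x a" if "x \<in> set R" for x
  proof -
    have "x \<noteq> u" using that ipg(2) by (auto simp: R_def dest: in_set_dropD)
    moreover have "\<not> (a = x \<or> adj E a x)" using g'(5) that unfolding touches_def R_def by auto
    ultimately show ?thesis by (auto simp: adj_sym)
  qed
  ultimately show thesis using that by blast
qed

lemma hole_path_local_chordalize_induced_path:
  assumes "hole_path (local_chordalize V E u) u p"
  shows "induced_path E p"
proof -
  have "u \<notin> set p" "induced_path (local_chordalize V E u) p" using assms by (auto simp: hole_path_def)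
  thus ?thesis by (subst induced_path_cong[of p E "local_chordalize V E u"])
    (use adj_local_chordalize_other in metis)+
qed

text \<open>If the end a = hd p were only a new neighbour of u, it would lie inside a hole of G through u.
  Then p!1 reaches an old neighbour of u outside the closed neighbourhood of a, along p and, if
  needed, on along a hole through u from the other end of p; so p!1 shares a hole with u and
  would be a new neighbour of u itself.\<close>
lemma hole_path_local_chordalize_hd:
  assumes sg: "simple_graph V E" and nc: "NC_vertex V E u"
    and hp: "hole_path (local_chordalize V E u) u p"
  shows "adj E u (hd p)"
proof (rule ccontr)
  assume na: "\<not> adj E u (hd p)"
  let ?E' = "local_chordalize V E u"
  have l3: "length p \<ge> 3" and un: "u \<notin> set p"
    and ua': "\<And>x. x \<in> set p \<Longrightarrow> adj ?E' u x \<longleftrightarrow> x = hd p \<or> x = last p"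
    using hp by (auto simp: hole_path_def)
  have ipE: "induced_path E p" using hole_path_local_chordalize_induced_path[OF hp] .
  have dp: "distinct p" using ipE by (simp add: induced_path_def)
  have p_adj: "adj E (p!i) (p!j) \<longleftrightarrow> j = Suc i \<or> i = Suc j" if "i < length p" "j < length p" for i j
    using ipE that unfolding induced_path_def by blast
  have pne: "p \<noteq> []" using l3 by auto
  hence hdp: "hd p = p!0" and lastp: "last p = p!(length p - 1)" by (auto simp: hd_conv_nth last_conv_nth)
  define a where "a = p!0"
  define y where "y = p!1"
  define D where "D = drop 2 p"
  have a_in: "a \<in> set p" using l3 unfolding a_def by (intro nth_mem) auto
  hence "adj ?E' u a" using ua' hdp by (simp add: a_def)
  hence aN: "a \<in> hole_nbrs V E u" using na hdp un a_in adj_local_chordalize[of V E u u a]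
    by (auto simp: a_def)
  have na: "\<not> adj E u a" using na hdp by (simp add: a_def)
  have ya: "adj E y a" using p_adj[of 1 0] l3 pne unfolding y_def a_def by simp
  have y_in: "y \<in> set p" "y \<noteq> hd p" "y \<noteq> last p" using hole_path_second[OF hp] unfolding y_def by auto
  hence yu: "y \<noteq> u" using un by auto
  have "\<not> adj ?E' u y" using ua'[OF y_in(1)] y_in(2,3) by blast
  hence yN: "y \<notin> hole_nbrs V E u" "\<not> adj E u y" using adj_local_chordalize[of V E u u y] by auto
  have D: "lazy_walk E D" "D \<noteq> []" "adj E y (hd D)" "last D = last p"
  proof -
    show "lazy_walk E D" unfolding D_def by (intro lazy_walk_drop induced_path_lazy_walk ipE)
    show "D \<noteq> []" "last D = last p" using l3 by (auto simp: D_def)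
    have "hd D = p!2" using l3 by (simp add: D_def hd_drop_conv_nth)
    thus "adj E y (hd D)" using p_adj[of 1 2] l3 unfolding y_def by (simp add: numeral_2_eq_2)
  qed
  have Dav: "x \<noteq> u \<and> x \<noteq> a \<and> \<not> adj E x a" if x: "x \<in> set D" for x
  proof -
    obtain j where j: "2 \<le> j" "j < length p" "x = p!j" using in_set_drop_nth[OF x[unfolded D_def]] by blast
    have "x \<noteq> u" using un j by auto
    moreover have "x \<noteq> a" using nth_eq_iff_index_eq[OF dp j(2), of 0] j pne unfolding a_def by auto
    moreover have "\<not> adj E x a" using p_adj[of j 0] j pne unfolding a_def by auto
    ultimately show ?thesis by blast
  qed
  show False
  proof (cases "adj E u (last p)")
    case True thus False using detour_hole_nbr[OF sg nc aN na ya yu yN(2) D(1-3)] D(4) Dav yN(1) by auto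
  next
    case False
    define b where "b = last p"
    have b_in: "b \<in> set p" using pne unfolding b_def by simp
    hence "adj ?E' u b" using ua' unfolding b_def by blast
    hence bN: "b \<in> hole_nbrs V E u" "\<not> adj E u b"
      using False b_in un adj_local_chordalize[of V E u u b] unfolding b_def by auto
    have last_idx: "0 < length p - 1" "length p - 1 < length p" using l3 by auto
    have ab: "a \<noteq> u" "a \<noteq> b" "\<not> adj E a b"
    proof -
      show "a \<noteq> u" using a_in un by blast
      show "a \<noteq> b" using nth_eq_iff_index_eq[OF dp _ last_idx(2), of 0] last_idx pne lastp
        unfolding a_def b_def by auto
      show "\<not> adj E a b" using p_adj[of 0 "length p - 1"] last_idx l3 pne lastp unfolding a_def b_def by auto
    qed
    obtain R where R: "lazy_walk E R" "R \<noteq> []" "adj E b (hd R)" "adj E u (last R)"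
      "\<And>x. x \<in> set R \<Longrightarrow> x \<noteq> u \<and> x \<noteq> a \<and> \<not> adj E x a"
      using walk_from_hole_nbr[OF sg nc bN ab] by blast
    have "lazy_walk E (D @ R)" using lazy_walk_append[OF D(1) R(1) D(2) R(2)] R(3) D(4) b_def by simp
    moreover have "adj E y (hd (D @ R))" "adj E u (last (D @ R))" using D(2,3) R(2,4) by auto
    moreover have "x \<noteq> u \<and> x \<noteq> a \<and> \<not> adj E x a" if "x \<in> set (D @ R)" for x
      using that Dav R(5) by auto
    ultimately show False using detour_hole_nbr[OF sg nc aN na ya yu yN(2), of "D @ R"] yN(1) D(2) by auto
  qed
qed

lemma hole_local_chordalize_notin:
  assumes sg: "simple_graph V E" and nc: "NC_vertex V E u"
    and H: "is_hole V (local_chordalize V E u) H"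
  shows "u \<notin> H"
proof
  assume "u \<in> H"
  let ?E' = "local_chordalize V E u"
  obtain p where hp: "hole_path ?E' u p" using hole_path_of_hole[OF H \<open>u \<in> H\<close>] by blast
  have l3: "length p \<ge> 3" and un: "u \<notin> set p"
    and ua': "\<And>x. x \<in> set p \<Longrightarrow> adj ?E' u x \<longleftrightarrow> x = hd p \<or> x = last p"
    using hp by (auto simp: hole_path_def)
  have ends: "adj E u (hd p)" "adj E u (last p)"
    using hole_path_local_chordalize_hd[OF sg nc hp]
      hole_path_local_chordalize_hd[OF sg nc hole_path_rev[OF hp]] l3 by (auto simp: hd_rev)
  have "hole_path E u p" unfolding hole_path_def
  proof (intro conjI hole_path_local_chordalize_induced_path[OF hp] l3 un ballI)
    fix x assume "x \<in> set p"
    thus "adj E u x \<longleftrightarrow> x = hd p \<or> x = last p" using ua' ends adj_local_chordalize by metis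
  qed
  hence hole: "is_hole V E (insert u (set p))" by (rule hole_path_is_hole[OF sg])
  \<comment> \<open>Both ends are old neighbours, so u and p already formed a hole of G and the
    chordalization joined u to p!1.\<close>
  have p1: "p!1 \<in> set p" "p!1 \<noteq> hd p" "p!1 \<noteq> last p" "p!1 \<noteq> u" using hole_path_second[OF hp] by auto
  have "p!1 \<in> hole_nbrs V E u" by (rule hole_nbrsI[OF hole]) (use p1 in auto)
  hence "adj ?E' u (p!1)" using adj_local_chordalize by metis
  thus False using ua'[OF p1(1)] p1 by simp
qed

lemma hole_local_chordalize:
  assumes sg: "simple_graph V E" and nc: "NC_vertex V E u"
    and H: "is_hole V (local_chordalize V E u) H"
  shows "is_hole V E H \<and> u \<notin> H"
proof -
  have uH: "u \<notin> H" using hole_local_chordalize_notin[OF sg nc H] .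
  have "is_hole V E H = is_hole V (local_chordalize V E u) H"
  proof (rule is_hole_cong)
    fix x y assume "x \<in> H" "y \<in> H"
    hence "x \<noteq> u" "y \<noteq> u" using uH by auto
    thus "{x, y} \<in> E \<longleftrightarrow> {x, y} \<in> local_chordalize V E u" using adj_local_chordalize_other[of x u y V E]
      by (simp add: adj_def)
  qed
  thus ?thesis using H uH by simp
qed

section \<open>Chordalizing along the cover\<close>

definition chordalize_inv :: "'a set \<Rightarrow> 'a set set \<Rightarrow> 'a set set \<Rightarrow> 'a set \<Rightarrow> bool" where
  "chordalize_inv V E E0 P \<longleftrightarrow> simple_graph V E0 \<and> E \<subseteq> E0 \<and>
     (\<forall>e\<in>E0 - E. \<exists>c\<in>P. \<exists>x. x \<noteq> c \<and> e = {c, x} \<and> (\<exists>H. is_hole V E H \<and> c \<in> H \<and> x \<in> H)) \<and>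
     (\<forall>H. is_hole V E0 H \<longrightarrow> is_hole V E H \<and> H \<inter> P = {})"

lemma chordalize_invD:
  assumes "chordalize_inv V E E0 P"
  shows "simple_graph V E0" "E \<subseteq> E0"
    "\<And>e. e \<in> E0 - E \<Longrightarrow> \<exists>c\<in>P. \<exists>x. x \<noteq> c \<and> e = {c, x} \<and> (\<exists>H. is_hole V E H \<and> c \<in> H \<and> x \<in> H)"
    "\<And>H. is_hole V E0 H \<Longrightarrow> is_hole V E H" "\<And>H. is_hole V E0 H \<Longrightarrow> H \<inter> P = {}"
  using assms unfolding chordalize_inv_def by auto

lemma chordalize_inv_hole_edges:
  assumes "chordalize_inv V E E0 P" "is_hole V E0 H"
  shows "hole_edges E0 H = hole_edges E H"
proof -
  have HP: "H \<inter> P = {}" using chordalize_invD(5)[OF assms] .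
  show ?thesis unfolding hole_edges_def
  proof (intro set_eqI iffI)
    fix e assume e: "e \<in> {e \<in> E0. e \<subseteq> H}"
    show "e \<in> {e \<in> E. e \<subseteq> H}"
    proof (rule ccontr)
      assume "e \<notin> {e \<in> E. e \<subseteq> H}"
      hence "e \<in> E0 - E" using e by auto
      then obtain c x where "c \<in> P" "e = {c, x}" using chordalize_invD(3)[OF assms(1)] by blast
      thus False using e HP by auto
    qed
  next
    fix e assume "e \<in> {e \<in> E. e \<subseteq> H}"
    thus "e \<in> {e \<in> E0. e \<subseteq> H}" using chordalize_invD(2)[OF assms(1)] by auto
  qed
qed

lemma chordalize_inv_NC_vertex:
  assumes "chordalize_inv V E E0 P" "NC_vertex V E u"
  shows "NC_vertex V E0 u"
  unfolding NC_vertex_def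
proof
  assume "\<exists>H\<in>holes_at V E0 u. \<exists>H'\<in>holes V E0 - holes_at V E0 u. share_consec_edges E0 H H'"
  then obtain H H' where H: "is_hole V E0 H" "u \<in> H" and H': "is_hole V E0 H'" "u \<notin> H'"
    and sh: "share_consec_edges E0 H H'" unfolding holes_at_def holes_def by auto
  have "hole_edges E0 H = hole_edges E H" "hole_edges E0 H' = hole_edges E H'"
    using chordalize_inv_hole_edges[OF assms(1)] H(1) H'(1) by auto
  hence "share_consec_edges E H H'" using sh unfolding share_consec_edges_def by simp
  moreover have "is_hole V E H" "is_hole V E H'" using chordalize_invD(4)[OF assms(1)] H(1) H'(1) by auto
  ultimately show False using assms(2) H(2) H'(2) unfolding NC_vertex_def holes_at_def holes_def by blast
qed

lemma chordalize_inv_step: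
  assumes I: "chordalize_inv V E E0 P" and nc: "NC_vertex V E u"
  shows "chordalize_inv V E (local_chordalize V E0 u) (insert u P)"
proof -
  have sg0: "simple_graph V E0" using chordalize_invD(1)[OF I] .
  have nc0: "NC_vertex V E0 u" using chordalize_inv_NC_vertex[OF I nc] .
  let ?E1 = "local_chordalize V E0 u"
  have "simple_graph V ?E1" using simple_graph_local_chordalize[OF sg0] .
  moreover have "E \<subseteq> ?E1" using chordalize_invD(2)[OF I] unfolding local_chordalize_def by auto
  moreover have "\<forall>e\<in>?E1 - E. \<exists>c\<in>insert u P. \<exists>x. x \<noteq> c \<and> e = {c, x} \<and> (\<exists>H. is_hole V E H \<and> c \<in> H \<and> x \<in> H)"
  proof
    fix e assume e: "e \<in> ?E1 - E"
    show "\<exists>c\<in>insert u P. \<exists>x. x \<noteq> c \<and> e = {c, x} \<and> (\<exists>H. is_hole V E H \<and> c \<in> H \<and> x \<in> H)"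
    proof (cases "e \<in> E0")
      case True
      hence "e \<in> E0 - E" using e by blast
      from chordalize_invD(3)[OF I this] show ?thesis by blast
    next
      case False
      then obtain w H where w: "e = {u, w}" "w \<noteq> u" "H \<in> holes_at V E0 u" "w \<in> H"
        using e unfolding local_chordalize_def by blast
      have "is_hole V E0 H" "u \<in> H" using w(3) unfolding holes_at_def holes_def by auto
      hence "is_hole V E H" using chordalize_invD(4)[OF I] by blast
      thus ?thesis using w \<open>u \<in> H\<close> by blast
    qed
  qed
  moreover have "\<forall>H. is_hole V ?E1 H \<longrightarrow> is_hole V E H \<and> H \<inter> insert u P = {}"
  proof (intro allI impI)
    fix H assume "is_hole V ?E1 H"
    hence "is_hole V E0 H" "u \<notin> H" using hole_local_chordalize[OF sg0 nc0] by auto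
    thus "is_hole V E H \<and> H \<inter> insert u P = {}" using chordalize_invD(4,5)[OF I] by blast
  qed
  ultimately show ?thesis unfolding chordalize_inv_def by (intro conjI) auto
qed

lemma chordalize_inv_seq:
  assumes "chordalize_inv V E E0 P" "\<forall>c\<in>set cs. NC_vertex V E c"
  shows "chordalize_inv V E (chordalize_seq V E0 cs) (P \<union> set cs)"
  using assms
proof (induction cs arbitrary: E0 P)
  case Nil thus ?case by simp
next
  case (Cons c cs)
  have "chordalize_inv V E (local_chordalize V E0 c) (insert c P)"
    using chordalize_inv_step[OF Cons.prems(1)] Cons.prems(2) by simp
  from Cons.IH[OF this] Cons.prems(2) show ?case by simp
qed

lemma chordalize_inv_init: "simple_graph V E \<Longrightarrow> chordalize_inv V E E {}"
  unfolding chordalize_inv_def by simp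

lemma new_edge_hole:
  assumes sg: "simple_graph V E" and nc: "\<And>c. c \<in> set cs \<Longrightarrow> NC_vertex V E c"
    and e: "e \<in> chordalize_seq V E cs - E"
  obtains c x H where "c \<in> set cs" "x \<noteq> c" "e = {c, x}" "is_hole V E H" "c \<in> H" "x \<in> H"
  using chordalize_invD(3)[OF chordalize_inv_seq[OF chordalize_inv_init[OF sg]] e] nc by auto

lemma NC_set_hole_unique:
  assumes "NC_set V E C" "is_hole V E H" "a \<in> H \<inter> C" "b \<in> H \<inter> C"
  shows "a = b"
proof (rule ccontr)
  assume "a \<noteq> b"
  hence "card {a, b} \<le> card (H \<inter> C)"
    using assms(3,4) is_hole_finite[OF assms(2)] by (intro card_mono) auto
  moreover have "card (H \<inter> C) \<le> 1" using assms(1,2) by (simp add: NC_set_def holes_def)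
  ultimately show False using \<open>a \<noteq> b\<close> by simp
qed

text \<open>The cover vertex that created the edge is x itself, since a hole meets the cover only once.\<close>
lemma new_edge_at_cover_vertex:
  assumes sg: "simple_graph V E" and nc: "NC_set V E C" and cs: "set cs = C"
    and x: "x \<in> C" "{x, v} \<in> chordalize_seq V E cs - E"
  obtains H where "is_hole V E H" "x \<in> H" "v \<in> H" "v \<noteq> x"
proof -
  have "\<And>c. c \<in> set cs \<Longrightarrow> NC_vertex V E c" using nc cs by (simp add: NC_set_def)
  then obtain c y H where c: "c \<in> C" "y \<noteq> c" "{x, v} = {c, y}" "is_hole V E H" "c \<in> H" "y \<in> H"
    using new_edge_hole[OF sg _ x(2)] cs by metis
  have "x = c \<and> v = y" using c x(1) NC_set_hole_unique[OF nc c(4), of c y]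
    by (auto simp: doubleton_eq_iff)
  thus thesis using that c by blast
qed

section \<open>Adjacent cover vertices\<close>

definition far :: "'a set set \<Rightarrow> 'a \<Rightarrow> 'a \<Rightarrow> 'a \<Rightarrow> bool" where
  "far E u w x \<longleftrightarrow> x \<noteq> u \<and> x \<noteq> w \<and> \<not> adj E u x \<and> \<not> adj E w x"

lemma far_commute: "far E u w x = far E w u x"
  unfolding far_def by blast

lemma walk_from_far_vertex:
  assumes sg: "simple_graph V E" and ncw: "NC_vertex V E w" and h: "hole_path E u q"
    and wq: "w \<notin> set q" and wu: "w \<noteq> u" and v: "v \<in> set q" "far E u w v"
  obtains W where "lazy_walk E W" "W \<noteq> []" "hd W = v" "last W \<in> set q" "adj E u (last W)"
    "\<not> adj E w (last W)" "\<And>x. x \<in> set W \<Longrightarrow> x = last W \<or> far E u w x"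
proof -
  have l3: "length q \<ge> 3" and un: "u \<notin> set q" using h by (auto simp: hole_path_def)
  obtain iv where iv: "iv < length q" "q!iv = v" using v(1) by (metis in_set_conv_nth)
  have "\<not> far E u w (q!0)" "\<not> far E u w (q!(length q - 1))"
  proof -
    have "q \<noteq> []" "length q - 1 < length q" using l3 by auto
    thus "\<not> far E u w (q!0)" "\<not> far E u w (q!(length q - 1))"
      using hole_path_adj_iff[OF h, of 0] hole_path_adj_iff[OF h, of "length q - 1"] unfolding far_def by auto
  qed
  then obtain a b where ab: "a < iv" "iv < b" "b < length q" "\<not> far E u w (q!a)" "\<not> far E u w (q!b)"
    "\<And>k. a < k \<Longrightarrow> k < b \<Longrightarrow> far E u w (q!k)"
    using maximal_run_around[of "\<lambda>x. \<not> far E u w x" q iv] v(2) iv by auto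
  have ends: "adj E u (q!c) \<or> adj E w (q!c)" if "c < length q" "\<not> far E u w (q!c)" for c
    using that nth_mem[OF that(1)] un wq unfolding far_def by auto
  have "\<not> (adj E w (q!a) \<and> adj E w (q!b))"
  proof
    assume "adj E w (q!a) \<and> adj E w (q!b)"
    moreover have "\<not> adj E w (q!k)" if "a < k" "k < b" for k using ab(6)[OF that] unfolding far_def by blast
    ultimately show False using NC_not_adj_run_ends[OF sg ncw h wq wu ab(1-3)] by blast
  qed
  then obtain c where c: "c = a \<or> c = b" "adj E u (q!c)" "\<not> adj E w (q!c)"
    using ends[of a] ends[of b] ab by auto
  obtain W where "lazy_walk E W" "W \<noteq> []" "hd W = v" "last W = q!c" "\<forall>x\<in>set W. x = q!c \<or> far E u w x"
    using lazy_walk_out_of_run[OF induced_path_lazy_walk ab(1-3), of E "far E u w" c] h ab(6) c(1) iv(2)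
    unfolding hole_path_def by blast
  moreover have "c < length q" using c(1) ab(1-3) by auto
  ultimately show thesis using that c(2,3) nth_mem by metis
qed

lemma hole_through_far_path:
  assumes sg: "simple_graph V E" and uw: "adj E u w" "u \<noteq> w"
    and ys: "induced_path E ys" "ys \<noteq> []" "hd ys = \<alpha>" "last ys = \<beta>"
    and \<alpha>: "adj E u \<alpha>" "\<not> adj E w \<alpha>" "\<alpha> \<noteq> w" and \<beta>: "adj E w \<beta>" "\<not> adj E u \<beta>" "\<beta> \<noteq> u"
    and far: "\<And>x. x \<in> set ys \<Longrightarrow> x = \<alpha> \<or> x = \<beta> \<or> far E u w x"
  shows "is_hole V E (insert u (set (ys @ [w])))"
proof -
  have ab: "\<alpha> \<noteq> \<beta>" using \<alpha>(1) \<beta>(2) by auto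
  have ly2: "length ys \<ge> 2"
  proof (cases ys)
    case (Cons x xs) thus ?thesis using ys(3,4) ab by (cases xs) auto
  qed (use ys(2) in simp)
  have lf: "loopfree E" using sg by (rule simple_graph_loopfree)
  have w_notin: "w \<notin> set ys" using far \<alpha>(3) \<beta>(1) loopfree_not_adj[OF lf] unfolding far_def by blast
  have "induced_path E (ys @ [w])"
  proof (rule induced_path_append[OF ys(1) induced_path_singleton[OF simple_graph_loopfree[OF sg]]])
    show "set ys \<inter> set [w] = {}" using w_notin by simp
    show "adj E (last ys) (hd [w])" using ys(4) \<beta>(1) by (simp add: adj_sym)
    fix x z assume "x \<in> set ys" "z \<in> set [w]" "adj E x z"
    thus "x = last ys \<and> z = hd [w]" using far[of x] \<alpha>(2) ys(4) adj_sym[of E x w] unfolding far_def by auto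
  qed (use ys(2) in auto)
  moreover have "u \<notin> set (ys @ [w])" using far \<alpha>(1) \<beta>(3) uw(2) loopfree_not_adj[OF lf] unfolding far_def by auto
  moreover have "adj E u x \<longleftrightarrow> x = hd (ys @ [w]) \<or> x = last (ys @ [w])" if "x \<in> set (ys @ [w])" for x
    using that far \<alpha>(1) \<beta>(2) ys(2,3) uw(1) unfolding far_def by auto
  ultimately have "hole_path E u (ys @ [w])" using ly2 unfolding hole_path_def by auto
  thus ?thesis by (rule hole_path_is_hole[OF sg])
qed

lemma adjacent_NC_no_common_hole_nbr:
  assumes sg: "simple_graph V E" and ncu: "NC_vertex V E u" and ncw: "NC_vertex V E w"
    and no_common: "\<And>H. is_hole V E H \<Longrightarrow> u \<in> H \<Longrightarrow> w \<in> H \<Longrightarrow> False"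
    and uw: "adj E u w" "u \<noteq> w"
    and Hu: "is_hole V E Hu" "u \<in> Hu" "v \<in> Hu"
    and Hw: "is_hole V E Hw" "w \<in> Hw" "v \<in> Hw"
    and v: "v \<noteq> u" "v \<noteq> w" "\<not> adj E u v" "\<not> adj E w v"
  shows False
proof -
  obtain q1 where q1: "hole_path E u q1" "set q1 = Hu - {u}" using hole_path_of_hole[OF Hu(1,2)] by blast
  obtain q2 where q2: "hole_path E w q2" "set q2 = Hw - {w}" using hole_path_of_hole[OF Hw(1,2)] by blast
  have wq1: "w \<notin> set q1" and uq2: "u \<notin> set q2" using no_common Hu Hw q1(2) q2(2) by auto
  have v_far: "far E u w v" "far E w u v" using v unfolding far_def by (auto simp: adj_sym)
  have vq: "v \<in> set q1" "v \<in> set q2" using q1(2) q2(2) Hu(3) Hw(3) v(1,2) by auto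
  obtain W1 where W1: "lazy_walk E W1" "W1 \<noteq> []" "hd W1 = v" "last W1 \<in> set q1"
      "adj E u (last W1)" "\<not> adj E w (last W1)" "\<And>x. x \<in> set W1 \<Longrightarrow> x = last W1 \<or> far E u w x"
    using walk_from_far_vertex[OF sg ncw q1(1) wq1 uw(2)[symmetric] vq(1) v_far(1)] by blast
  obtain W2 where W2: "lazy_walk E W2" "W2 \<noteq> []" "hd W2 = v" "last W2 \<in> set q2"
      "adj E w (last W2)" "\<not> adj E u (last W2)" "\<And>x. x \<in> set W2 \<Longrightarrow> x = last W2 \<or> far E w u x"
    using walk_from_far_vertex[OF sg ncu q2(1) uq2 uw(2) vq(2) v_far(2)] by blast
  have "lazy_walk E (rev W1 @ W2)"
    using lazy_walk_append[OF lazy_walk_rev[OF W1(1)] W2(1)] W1(2,3) W2(2,3) by (simp add: last_rev)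
  then obtain ys where ys: "induced_path E ys" "ys \<noteq> []" "hd ys = last W1" "last ys = last W2"
    "set ys \<subseteq> set W1 \<union> set W2"
    using induced_path_in_lazy_walk[OF simple_graph_loopfree[OF sg], of "rev W1 @ W2"] W1(2) W2(2)
    by (auto simp: hd_rev)
  have ends: "last W1 \<noteq> w" "last W2 \<noteq> u" using W1(4) W2(4) wq1 uq2 by auto
  have "x = last W1 \<or> x = last W2 \<or> far E u w x" if "x \<in> set ys" for x
    using that ys(5) W1(7) W2(7)[of x] far_commute[of E w u x] by blast
  hence "is_hole V E (insert u (set (ys @ [w])))"
    by (rule hole_through_far_path[OF sg uw ys(1-4) W1(5,6) ends(1) W2(5,6) ends(2)])
  thus False using no_common by auto
qed

theorem lemma2p5:
  fixes V :: "'a set" and E :: "'a set set" and C :: "'a set" and cs :: "'a list"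
    and u w :: 'a
  assumes "simple_graph V E"
    and "hole_cover V E C"
    and "NC_set V E C"
    and "distinct cs" and "set cs = C"
    and "u \<in> C" and "w \<in> C" and "{u, w} \<in> E"
  shows "\<not> (\<exists>v. {u, v} \<in> chordalize_seq V E cs - E \<and> {w, v} \<in> chordalize_seq V E cs - E)"
proof
  assume "\<exists>v. {u, v} \<in> chordalize_seq V E cs - E \<and> {w, v} \<in> chordalize_seq V E cs - E"
  then obtain v where vu: "{u, v} \<in> chordalize_seq V E cs - E" and vw: "{w, v} \<in> chordalize_seq V E cs - E"
    by blast
  obtain Hu where Hu: "is_hole V E Hu" "u \<in> Hu" "v \<in> Hu" "v \<noteq> u"
    using new_edge_at_cover_vertex[OF assms(1,3,5,6) vu] .
  obtain Hw where Hw: "is_hole V E Hw" "w \<in> Hw" "v \<in> Hw" "v \<noteq> w"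
    using new_edge_at_cover_vertex[OF assms(1,3,5,7) vw] .
  have uw: "adj E u w" "u \<noteq> w"
    using assms(8) loopfree_not_adj[OF simple_graph_loopfree[OF assms(1)]] by (auto simp: adj_def)
  have "\<not> adj E u v" "\<not> adj E w v" using vu vw by (auto simp: adj_def)
  moreover have "NC_vertex V E u" "NC_vertex V E w" using assms(3,6,7) by (auto simp: NC_set_def)
  moreover have "\<And>H. is_hole V E H \<Longrightarrow> u \<in> H \<Longrightarrow> w \<in> H \<Longrightarrow> False"
    using NC_set_hole_unique[OF assms(3)] assms(6,7) uw(2) by blast
  ultimately show False using adjacent_NC_no_common_hole_nbr[OF assms(1) _ _ _ uw Hu(1-3) Hw(1-3)] Hu(4) Hw(4)
    by blast
qed

end
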